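(* Let $H$ be a finite-dimensional real Hilbert space, $A\in B(H,H)$ symmetric with $\|A^{1/2}\mathbf{u}\|^2\ge\ell_0\|\mathbf{u}\|^2$ for all $\mathbf{u}$ ($\ell_0>0$), $\mathbf{N}:H\to H$ locally Lipschitz with $\mathbf{N}(\mathbf{u})\cdot\mathbf{u}=0$ for all $\mathbf{u}$, $\mathbf{F}\in H$ constant, and $\gamma>0$. Let $\mathscr{A}$ be the global attractor of $\frac{d\mathbf{u}}{dt}+A\mathbf{u}+\mathbf{N}(\mathbf{u})=\mathbf{F}$ on $H$, and $\mathscr{A}_q$ the global attractor of the augmented system $\frac{d\mathbf{u}}{dt}+A\mathbf{u}+q\mathbf{N}(\mathbf{u})=\mathbf{F}$, $\frac{dq}{dt}-\mathbf{N}(\mathbf{u})\cdot\mathbf{u}=-\gamma q+\gamma$ on $H\times\mathbb{R}$. For $k\in(0,1]$ let $\mathbb{S}_k((\mathbf{u}_0,\mathbf{u}_1),(q_0,q_1))=((\mathbf{u}_1,\mathbf{u}_2),(q_1,q_2))$, where $(\mathbf{u}_2,q_2)$ is the unique solution of $$\frac{3\mathbf{u}_2-4\mathbf{u}_1+\mathbf{u}_0}{2k}+A\mathbf{u}_2+q_2\mathbf{N}(2\mathbf{u}_1-\mathbf{u}_0)=\mathbf{F},\qquad \frac{3q_2-4q_1+q_0}{2k}+\gamma q_2-\mathbf{N}(2\mathbf{u}_1-\mathbf{u}_0)\cdot\mathbf{u}_2=\gamma,$$ and let $\mathscr{A}_k$ be the global attractor of $\mathbb{S}_k$ on $(H\times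 H)\times\mathbb{R}^2$. Then $$\mathrm{dist}(\mathscr{A}_k,\mathbb{1}\mathscr{A}_q)\to0\quad\text{as }k\to0,$$ where $\mathbb{1}\mathscr{A}_q=\{((\mathbf{u},q),(\mathbf{u},q)):(\mathbf{u},q)\in\mathscr{A}_q\}$. In particular, for $j=1,2$, $$\mathrm{dist}(\mathcal{P}_u\mathcal{P}_j\mathscr{A}_k,\mathscr{A})\to0\quad\text{as }k\to0.$$
   Context: Elements $((\mathbf{u}_1,\mathbf{u}_2),(q_1,q_2))$ of $(H\times H)\times\mathbb{R}^2$ are identified with pairs $((\mathbf{u}_1,q_1),(\mathbf{u}_2,q_2))\in(H\times\mathbb{R})^2$. $\mathcal{P}_j$ is the projection onto the $j$-th component, $\mathcal{P}_j((\mathbf{u}_1,\mathbf{u}_2),(q_1,q_2))=(\mathbf{u}_j,q_j)$, and $\mathcal{P}_u:H\times\mathbb{R}\to H$, $(\mathbf{u},q)\mapsto\mathbf{u}$. $\mathrm{dist}(X,Y)=\sup_{x\in X}\inf_{y\in Y}\|x-y\|$ is the Hausdorff semi-distance. Global attractor: compact invariant set attracting all bounded sets. *)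

theory Defs
  imports "HOL-Analysis.Analysis"
begin

text \<open>Hausdorff semi-distance dist(X,Y) = sup over x in X of inf over y in Y of the distance,
  valued in [0,\<infinity>] so that it is well defined for arbitrary sets
  (sup of the empty set is 0, inf over the empty set is \<infinity>).\<close>
definition hsdist :: "'b::metric_space set \<Rightarrow> 'b set \<Rightarrow> ennreal" where
  "hsdist X Y = (SUP x\<in>X. INF y\<in>Y. ennreal (dist x y))"

definition global_attractor_flow :: "(real \<Rightarrow> 'b::metric_space \<Rightarrow> 'b) \<Rightarrow> 'b set \<Rightarrow> bool" where
  "global_attractor_flow S X \<longleftrightarrow>
     compact X \<and> (\<forall>t\<ge>0. S t ` X = X) \<and>
     (\<forall>B. bounded B \<longrightarrow> ((\<lambda>t. hsdist (S t ` B) X) \<longlongrightarrow> 0) at_top)"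

definition global_attractor_map :: "('b::metric_space \<Rightarrow> 'b) \<Rightarrow> 'b set \<Rightarrow> bool" where
  "global_attractor_map T X \<longleftrightarrow>
     compact X \<and> T ` X = X \<and>
     (\<forall>B. bounded B \<longrightarrow> ((\<lambda>n. hsdist ((T ^^ n) ` B) X) \<longlongrightarrow> 0) sequentially)"

definition solution_semigroup :: "('b::real_normed_vector \<Rightarrow> 'b) \<Rightarrow> (real \<Rightarrow> 'b \<Rightarrow> 'b) \<Rightarrow> bool" where
  "solution_semigroup f S \<longleftrightarrow>
     (\<forall>x. S 0 x = x \<and>
        (\<forall>t\<ge>0. ((\<lambda>s. S s x) has_vector_derivative f (S t x)) (at t within {0..})))"

definition locally_lipschitz :: "('b::metric_space \<Rightarrow> 'c::metric_space) \<Rightarrow> bool" where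
  "locally_lipschitz N \<longleftrightarrow>
     (\<forall>x. \<exists>r>0. \<exists>L. \<forall>y\<in>ball x r. \<forall>z\<in>ball x r. dist (N y) (N z) \<le> L * dist y z)"

definition nse_field :: "('a::real_inner \<Rightarrow> 'a) \<Rightarrow> ('a \<Rightarrow> 'a) \<Rightarrow> 'a \<Rightarrow> 'a \<Rightarrow> 'a" where
  "nse_field A N F u = F - A u - N u"

definition aug_field :: "('a::real_inner \<Rightarrow> 'a) \<Rightarrow> ('a \<Rightarrow> 'a) \<Rightarrow> 'a \<Rightarrow> real \<Rightarrow> 'a \<times> real \<Rightarrow> 'a \<times> real" where
  "aug_field A N F \<gamma> p = (case p of (u, q) \<Rightarrow>
      (F - A u - q *\<^sub>R N u, N u \<bullet> u - \<gamma> * q + \<gamma>))"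

definition bdf2_eqs :: "('a::real_inner \<Rightarrow> 'a) \<Rightarrow> ('a \<Rightarrow> 'a) \<Rightarrow> 'a \<Rightarrow> real \<Rightarrow> real \<Rightarrow>
    'a \<Rightarrow> real \<Rightarrow> 'a \<Rightarrow> real \<Rightarrow> 'a \<Rightarrow> real \<Rightarrow> bool" where
  "bdf2_eqs A N F \<gamma> k u0 q0 u1 q1 u2 q2 \<longleftrightarrow>
     (1 / (2 * k)) *\<^sub>R (3 *\<^sub>R u2 - 4 *\<^sub>R u1 + u0) + A u2 + q2 *\<^sub>R N (2 *\<^sub>R u1 - u0) = F \<and>
     (3 * q2 - 4 * q1 + q0) / (2 * k) + \<gamma> * q2 - N (2 *\<^sub>R u1 - u0) \<bullet> u2 = \<gamma>"

text \<open>The map S_k; the element ((u0,u1),(q0,q1)) of (H\<times>H)\<times>R^2 is identified with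
  ((u0,q0),(u1,q1)) \<in> (H\<times>R)^2.\<close>
definition bdf2_map :: "('a::real_inner \<Rightarrow> 'a) \<Rightarrow> ('a \<Rightarrow> 'a) \<Rightarrow> 'a \<Rightarrow> real \<Rightarrow> real \<Rightarrow>
    ('a \<times> real) \<times> ('a \<times> real) \<Rightarrow> ('a \<times> real) \<times> ('a \<times> real)" where
  "bdf2_map A N F \<gamma> k w = (case w of ((u0, q0), (u1, q1)) \<Rightarrow>
      ((u1, q1), (THE p. bdf2_eqs A N F \<gamma> k u0 q0 u1 q1 (fst p) (snd p))))"

definition diag_set :: "'b set \<Rightarrow> ('b \<times> 'b) set" where
  "diag_set X = {(x, x) | x. x \<in> X}"

end

theory Submission
  imports Defs
begin

text \<open>
  The BDF2 scheme inherits the dissipativity of the augmented system: the nonlinearity couples the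
  \<open>u\<close>- and \<open>q\<close>-equations skew-symmetrically, so the G-stability identity of BDF2 yields an energy
  inequality that confines every bounded complete orbit of \<open>S\<^sub>k\<close> to a ball whose radius does not
  depend on \<open>k\<close>. On that ball BDF2, read as a one-step method for \<open>3 z\<^sub>n\<^sub>+\<^sub>1 - z\<^sub>n\<close>, is consistent
  with the augmented flow, so over a fixed time \<open>T\<close> its orbits stay within \<open>O(k)\<close> of flow
  trajectories. A point of \<open>\<A>\<^sub>k\<close> ends a complete orbit; running the flow from the orbit point
  a time \<open>T\<close> earlier, with \<open>T\<close> so large that the flow has brought the ball \<open>\<epsilon>\<close>-close to \<open>\<A>\<^sub>q\<close>,
  shows that both components of the point are within \<open>\<epsilon> + O(k)\<close> of a single point of \<open>\<A>\<^sub>q\<close>.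
  Finally \<open>q - 1\<close> decays like \<open>exp (-\<gamma> t)\<close> along the flow, so \<open>q = 1\<close> on the invariant set
  \<open>\<A>\<^sub>q\<close>; there the \<open>u\<close>-component solves the original equation, whence \<open>\<A>\<^sub>q\<close> projects into \<open>\<A>\<close>.
\<close>

section \<open>Hausdorff semi-distance and attraction\<close>

lemma hsdist_le:
  assumes "e \<ge> 0" "\<And>x. x \<in> X \<Longrightarrow> \<exists>y\<in>Y. dist x y \<le> e"
  shows "hsdist X Y \<le> ennreal e"
  unfolding hsdist_def
proof (rule SUP_least)
  fix x assume "x \<in> X"
  then obtain y where "y \<in> Y" "dist x y \<le> e" using assms by blast
  then show "(INF y\<in>Y. ennreal (dist x y)) \<le> ennreal e"
    by (meson INF_lower2 ennreal_leI)
qed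

lemma hsdist_less_imp_near:
  assumes "hsdist X Y < ennreal e" "x \<in> X"
  shows "\<exists>y\<in>Y. dist x y < e"
proof -
  have "(INF y\<in>Y. ennreal (dist x y)) < ennreal e"
    using assms unfolding hsdist_def by (meson SUP_upper le_less_trans)
  then obtain y where "y \<in> Y" "ennreal (dist x y) < ennreal e" by (meson INF_less_iff)
  then show ?thesis using ennreal_less_iff zero_le_dist by blast
qed

lemma hsdist_image_le:
  assumes "\<And>x y. dist (g x) (g y) \<le> dist x y" "g ` Y \<subseteq> Z"
  shows "hsdist (g ` X) Z \<le> hsdist X Y"
  unfolding hsdist_def image_image
proof (rule SUP_mono')
  fix x
  show "(INF z\<in>Z. ennreal (dist (g x) z)) \<le> (INF y\<in>Y. ennreal (dist x y))"
  proof (rule INF_greatest)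
    fix y assume "y \<in> Y"
    then have "(INF z\<in>Z. ennreal (dist (g x) z)) \<le> ennreal (dist (g x) (g y))"
      using assms(2) by (auto intro: INF_lower)
    also have "\<dots> \<le> ennreal (dist x y)" using assms(1) by (rule ennreal_leI)
    finally show "(INF z\<in>Z. ennreal (dist (g x) z)) \<le> ennreal (dist x y)" .
  qed
qed

lemma tendsto_hsdist_zeroI:
  assumes "\<And>e. e > 0 \<Longrightarrow> eventually (\<lambda>k. \<forall>x\<in>X k. \<exists>y\<in>Y. dist x y \<le> e) F"
  shows "((\<lambda>k. hsdist (X k) Y) \<longlongrightarrow> 0) F"
proof (rule order_tendstoI)
  fix a :: ennreal assume "a < 0" then show "eventually (\<lambda>k. a < hsdist (X k) Y) F" by simp
next
  fix a :: ennreal assume a: "0 < a"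
  obtain e where e: "0 < e" "ennreal e < a"
  proof (cases "a = top")
    case True then show ?thesis using that[of 1] by simp
  next
    case False
    then obtain r where r: "a = ennreal r" "r \<ge> 0" by (cases a) auto
    then have "r > 0" using a by simp
    then show ?thesis using that[of "r/2"] r by (simp add: ennreal_lessI)
  qed
  show "eventually (\<lambda>k. hsdist (X k) Y < a) F"
    using assms[OF e(1)]
  proof (rule eventually_mono)
    fix k assume "\<forall>x\<in>X k. \<exists>y\<in>Y. dist x y \<le> e"
    then have "hsdist (X k) Y \<le> ennreal e" using e by (intro hsdist_le) auto
    then show "hsdist (X k) Y < a" using e(2) by order
  qed
qed

lemma tendsto_hsdist_image:
  assumes "((\<lambda>k. hsdist (X k) Y) \<longlongrightarrow> 0) F"
    and "\<And>x y. dist (g x) (g y) \<le> dist x y" "g ` Y \<subseteq> Z"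
  shows "((\<lambda>k. hsdist (g ` X k) Z) \<longlongrightarrow> 0) F"
  by (rule tendsto_sandwich[OF _ _ tendsto_const assms(1)])
    (use hsdist_image_le[OF assms(2,3)] in auto)

lemma global_attractor_flow_attracts:
  assumes "global_attractor_flow S X" "bounded B" "e > 0"
  obtains T where "\<And>t x. t \<ge> T \<Longrightarrow> x \<in> B \<Longrightarrow> \<exists>y\<in>X. dist (S t x) y < e"
proof -
  have "((\<lambda>t. hsdist (S t ` B) X) \<longlongrightarrow> 0) at_top"
    using assms unfolding global_attractor_flow_def by blast
  then have "eventually (\<lambda>t. hsdist (S t ` B) X < ennreal e) at_top"
    using assms(3) by (simp add: order_tendstoD(2))
  then obtain T where "\<forall>t\<ge>T. hsdist (S t ` B) X < ennreal e"
    by (auto simp: eventually_at_top_linorder)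
  then show ?thesis using that by (meson hsdist_less_imp_near imageI)
qed

section \<open>Complete orbits and recursive inequalities\<close>

lemma surj_on_obtain_biinfinite_orbit:
  assumes "T ` X = X" "x \<in> X"
  obtains w :: "int \<Rightarrow> 'b" where "w 0 = x" "\<And>n. w n \<in> X" "\<And>n. T (w n) = w (n + 1)"
proof -
  have "\<forall>y\<in>X. \<exists>z\<in>X. T z = y" using assms(1) by (metis imageE)
  then obtain p where p: "\<And>y. y \<in> X \<Longrightarrow> p y \<in> X \<and> T (p y) = y" by metis
  define w where "w n = (if n \<ge> 0 then (T ^^ nat n) x else (p ^^ nat (-n)) x)" for n
  have TX: "T y \<in> X" if "y \<in> X" for y using assms(1) that by blast
  have "(T ^^ m) x \<in> X" for m by (induction m) (use assms TX in auto)
  moreover have pX: "(p ^^ m) x \<in> X" for m by (induction m) (use assms p in auto)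
  ultimately have wX: "w n \<in> X" for n by (simp add: w_def)
  have "T (w n) = w (n + 1)" for n
  proof (cases "n \<ge> 0")
    case True then show ?thesis by (simp add: w_def nat_add_distrib)
  next
    case False
    define m where "m = nat (- n - 1)"
    have m: "n = - int (Suc m)" using False by (simp add: m_def)
    show ?thesis
    proof (cases m)
      case 0 then show ?thesis using m p assms(2) by (simp add: w_def)
    next
      case (Suc m')
      have "w n = p ((p ^^ Suc m') x)" "w (n + 1) = (p ^^ Suc m') x"
        using m Suc by (simp_all add: w_def nat_add_distrib)
      then show ?thesis using p pX by simp
    qed
  qed
  moreover have "w 0 = x" by (simp add: w_def)
  ultimately show ?thesis using that wX by blast
qed

text \<open>A bounded bi-infinite sequence needs no initial value: boundedness alone pins the recursion down.\<close>

lemma bounded_recursion_le: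
  fixes x :: "int \<Rightarrow> real"
  assumes "bdd_above (range x)" "a > 0" "\<And>n. x n * (1 + a) \<le> x (n - p) + b"
  shows "x n \<le> b / a"
proof -
  let ?S = "Sup (range x)"
  have "x m \<le> (?S + b) / (1 + a)" for m
    using assms(3)[of m] cSup_upper[OF rangeI assms(1), of "m - p"] assms(2)
    by (simp add: field_simps)
  then have "?S \<le> (?S + b) / (1 + a)" by (intro cSup_least) auto
  then have "?S \<le> b / a" using assms(2) by (simp add: field_simps)
  then show ?thesis using cSup_upper[OF rangeI assms(1), of n] by linarith
qed

lemma discrete_gronwall:
  fixes e :: "nat \<Rightarrow> real"
  assumes step: "\<And>j. j < M \<Longrightarrow> e (Suc j) \<le> (1 + a) * e j + b"
    and "a \<ge> 0" "b \<ge> 0" "e 0 \<ge> 0"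
  shows "e M \<le> exp (real M * a) * (e 0 + real M * b)"
proof -
  have "e j \<le> (1 + a) ^ j * (e 0 + real j * b)" if "j \<le> M" for j
    using that
  proof (induction j)
    case (Suc j)
    have "e (Suc j) \<le> (1 + a) * e j + b" using Suc.prems step by simp
    also have "\<dots> \<le> (1 + a) * ((1 + a) ^ j * (e 0 + real j * b)) + b"
      using Suc assms(2) by (simp add: mult_left_mono)
    also have "\<dots> \<le> (1 + a) ^ Suc j * (e 0 + real j * b) + (1 + a) ^ Suc j * b"
      using mult_right_mono[OF one_le_power[of "1 + a" "Suc j"] assms(3)] assms(2) by simp
    finally show ?case by (simp add: algebra_simps)
  qed simp
  then have "e M \<le> (1 + a) ^ M * (e 0 + real M * b)" by simp
  also have "\<dots> \<le> exp a ^ M * (e 0 + real M * b)"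
    using assms(2-4) by (intro mult_right_mono power_mono) (auto simp: exp_ge_add_one_self)
  also have "exp a ^ M = exp (real M * a)" by (simp add: exp_of_nat_mult)
  finally show ?thesis .
qed

lemma locally_lipschitz_imp_local_lipschitz:
  assumes "locally_lipschitz g"
  shows "local_lipschitz T X (\<lambda>_. g)"
proof (rule local_lipschitzI)
  fix t x
  obtain r L where r: "r > 0" and L: "\<forall>y\<in>ball x r. \<forall>z\<in>ball x r. dist (g y) (g z) \<le> L * dist y z"
    using assms unfolding locally_lipschitz_def by blast
  have "(max L 0)-lipschitz_on (cball x (r / 2) \<inter> X) g"
  proof (rule lipschitz_onI)
    fix y z assume "y \<in> cball x (r / 2) \<inter> X" "z \<in> cball x (r / 2) \<inter> X"
    then have "dist (g y) (g z) \<le> L * dist y z" using L r by auto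
    also have "\<dots> \<le> max L 0 * dist y z" by (simp add: mult_right_mono)
    finally show "dist (g y) (g z) \<le> max L 0 * dist y z" .
  qed simp
  then show "\<exists>u>0. \<exists>L. \<forall>t\<in>cball t u \<inter> T. L-lipschitz_on (cball x u \<inter> X) g"
    using r by (intro exI[of _ "r / 2"]) auto
qed

lemma locally_lipschitz_lipschitz_on_compact:
  assumes "locally_lipschitz g" "compact K"
  obtains L where "L-lipschitz_on K g"
  using local_lipschitz_compact_implies_lipschitz[OF locally_lipschitz_imp_local_lipschitz[OF assms(1)]
      assms(2) compact_sing[of "0::real"]]
  by auto

lemma lipschitz_on_compact_imp_bounded:
  fixes g :: "'a::metric_space \<Rightarrow> 'b::real_normed_vector"
  assumes "L-lipschitz_on K g" "compact K"
  obtains M where "M \<ge> 0" "\<And>x. x \<in> K \<Longrightarrow> norm (g x) \<le> M"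
proof -
  have "bounded (g ` K)"
    using assms by (intro compact_imp_bounded compact_continuous_image lipschitz_on_continuous_on)
  then show ?thesis using that unfolding bounded_pos by (metis imageI less_le)
qed

lemma norm_fst_le_norm: "norm (fst z) \<le> norm z"
  using norm_fst_le[of "fst z" "snd z"] by simp

lemma norm_snd_le_norm: "norm (snd z) \<le> norm z"
  using norm_snd_le[of "snd z" "fst z"] by simp

lemma lipschitz_on_fst: "1-lipschitz_on X fst"
  by (rule lipschitz_onI) (auto simp: dist_fst_le)

lemma lipschitz_on_snd: "1-lipschitz_on X snd"
  by (rule lipschitz_onI) (auto simp: dist_snd_le)

lemma bounded_bilinear_lipschitz_on:
  fixes f :: "'a::metric_space \<Rightarrow> 'b::real_normed_vector" and g :: "'a \<Rightarrow> 'c::real_normed_vector"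
  assumes "bounded_bilinear bil" "compact K" "Lf-lipschitz_on K f" "Lg-lipschitz_on K g"
  obtains L where "L-lipschitz_on K (\<lambda>x. bil (f x) (g x))"
proof -
  interpret bounded_bilinear bil by (fact assms(1))
  obtain B where B: "B > 0" "\<And>a b. norm (bil a b) \<le> norm a * norm b * B" using pos_bounded by blast
  obtain Mf where Mf: "Mf \<ge> 0" "\<And>x. x \<in> K \<Longrightarrow> norm (f x) \<le> Mf"
    using lipschitz_on_compact_imp_bounded[OF assms(3,2)] by blast
  obtain Mg where Mg: "Mg \<ge> 0" "\<And>x. x \<in> K \<Longrightarrow> norm (g x) \<le> Mg"
    using lipschitz_on_compact_imp_bounded[OF assms(4,2)] by blast
  have Lf: "Lf \<ge> 0" and Lg: "Lg \<ge> 0" using assms(3,4) by (auto intro: lipschitz_on_nonneg)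
  have "(B * (Lf * Mg + Mf * Lg))-lipschitz_on K (\<lambda>x. bil (f x) (g x))"
  proof (rule lipschitz_onI)
    fix x y assume xy: "x \<in> K" "y \<in> K"
    have df: "norm (f x - f y) \<le> Lf * dist x y" and dg: "norm (g x - g y) \<le> Lg * dist x y"
      using lipschitz_onD[OF assms(3) xy] lipschitz_onD[OF assms(4) xy] by (simp_all add: dist_norm)
    have "bil (f x) (g x) - bil (f y) (g y) = bil (f x - f y) (g x) + bil (f y) (g x - g y)"
      by (simp add: diff_left diff_right)
    then have "norm (bil (f x) (g x) - bil (f y) (g y))
        \<le> norm (f x - f y) * norm (g x) * B + norm (f y) * norm (g x - g y) * B"
      by (metis B(2) add_mono norm_triangle_le)
    also have "\<dots> \<le> (Lf * dist x y) * Mg * B + Mf * (Lg * dist x y) * B"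
      using B(1) Mf Mg xy df dg Lf Lg by (intro add_mono mult_right_mono mult_mono) auto
    finally show "dist (bil (f x) (g x)) (bil (f y) (g y)) \<le> B * (Lf * Mg + Mf * Lg) * dist x y"
      by (simp add: dist_norm algebra_simps)
  qed (use B Lf Lg Mf Mg in simp)
  then show ?thesis by (rule that)
qed

section \<open>Forward solutions of autonomous equations\<close>

definition forward_solution :: "('b::real_normed_vector \<Rightarrow> 'b) \<Rightarrow> (real \<Rightarrow> 'b) \<Rightarrow> bool" where
  "forward_solution g y \<longleftrightarrow> (\<forall>t\<ge>0. (y has_vector_derivative g (y t)) (at t within {0..}))"

lemma solution_semigroup_iff:
  "solution_semigroup g S \<longleftrightarrow> (\<forall>x. S 0 x = x \<and> forward_solution g (\<lambda>t. S t x))"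
  by (auto simp: solution_semigroup_def forward_solution_def)

lemma forward_solution_derivative:
  assumes "forward_solution g y" "t \<in> I" "I \<subseteq> {0..}"
  shows "(y has_vector_derivative g (y t)) (at t within I)"
  using assms by (auto simp: forward_solution_def intro: has_vector_derivative_within_subset)

lemma deriv_le_imp_diff_le:
  fixes \<phi> :: "real \<Rightarrow> real"
  assumes "a \<le> b"
    and "\<And>t. a \<le> t \<Longrightarrow> t \<le> b \<Longrightarrow> (\<phi> has_vector_derivative D t) (at t within {a..b})"
    and "\<And>t. a \<le> t \<Longrightarrow> t \<le> b \<Longrightarrow> D t \<le> B"
  shows "\<phi> b - \<phi> a \<le> B * (b - a)"
proof -
  obtain x where x: "x \<in> {a..b}" "\<phi> b - \<phi> a = D x * (b - a)"
    using mvt_very_simple[OF assms(1), of \<phi> "\<lambda>x h. D x * h"] assms(2)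
    by (force simp: has_vector_derivative_def mult.commute)
  then show ?thesis using assms(1,3) by (simp add: mult_right_mono)
qed

lemma forward_solution_norm_growth:
  fixes y :: "real \<Rightarrow> 'b::real_inner"
  assumes "forward_solution g y" "\<And>x. x \<bullet> g x \<le> C" "t \<ge> 0"
  shows "(norm (y t))\<^sup>2 \<le> (norm (y 0))\<^sup>2 + 2 * C * t"
proof -
  have "y t \<bullet> y t - y 0 \<bullet> y 0 \<le> (2 * C) * (t - 0)"
  proof (rule deriv_le_imp_diff_le[OF assms(3)])
    fix s assume "0 \<le> s" "s \<le> t"
    then have ds: "(y has_vector_derivative g (y s)) (at s within {0..t})"
      using assms(1) by (intro forward_solution_derivative) auto
    show "((\<lambda>s. y s \<bullet> y s) has_vector_derivative (y s \<bullet> g (y s) + g (y s) \<bullet> y s)) (at s within {0..t})"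
      by (rule bounded_bilinear.has_vector_derivative[OF bounded_bilinear_inner ds ds])
    show "y s \<bullet> g (y s) + g (y s) \<bullet> y s \<le> 2 * C" using assms(2)[of "y s"] by (simp add: inner_commute)
  qed
  then show ?thesis by (simp add: power2_norm_eq_inner)
qed

lemma forward_solution_increment:
  assumes "forward_solution g y" "0 \<le> s" "s \<le> t"
    and "\<And>\<tau>. s \<le> \<tau> \<Longrightarrow> \<tau> \<le> t \<Longrightarrow> norm (g (y \<tau>)) \<le> K"
  shows "norm (y t - y s) \<le> K * (t - s)"
proof -
  have "norm (y t - y s) \<le> K * norm (t - s)"
  proof (rule differentiable_bound[of "{s..t}" y "\<lambda>x h. h *\<^sub>R g (y x)"])
    fix x assume "x \<in> {s..t}"
    then show "(y has_derivative (\<lambda>h. h *\<^sub>R g (y x))) (at x within {s..t})"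
      using assms(1,2) forward_solution_derivative[of g y x "{s..t}"]
      by (auto simp: has_vector_derivative_def)
    show "onorm (\<lambda>h. h *\<^sub>R g (y x)) \<le> K"
      using \<open>x \<in> {s..t}\<close> assms(4) onorm_scaleR_left[OF bounded_linear_ident, of "g (y x)"]
      by (simp add: onorm_id)
  qed (use assms(3) in auto)
  then show ?thesis using assms(3) by simp
qed

lemma forward_solution_linearization:
  assumes "forward_solution g y" "0 \<le> s" "s \<le> t"
    and "L-lipschitz_on (cball 0 R) g"
    and "\<And>\<tau>. s \<le> \<tau> \<Longrightarrow> \<tau> \<le> t \<Longrightarrow> norm (y \<tau>) \<le> R"
    and "\<And>\<tau>. s \<le> \<tau> \<Longrightarrow> \<tau> \<le> t \<Longrightarrow> norm (g (y \<tau>)) \<le> K"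
  shows "norm (y t - y s - (t - s) *\<^sub>R g (y s)) \<le> L * K * (t - s)\<^sup>2"
proof -
  have "norm (y t - y s - (t - s) *\<^sub>R g (y s)) \<le> norm (t - s) * (L * K * (t - s))"
  proof (rule vector_differentiable_bound_linearization)
    fix x assume x: "x \<in> {s..t}"
    then show "(y has_vector_derivative g (y x)) (at x within {s..t})"
      using assms(1,2) by (intro forward_solution_derivative) auto
    have "norm (g (y x) - g (y s)) \<le> L * norm (y x - y s)"
      using x assms(3,5) by (intro lipschitz_on_normD[OF assms(4)]) auto
    also have "\<dots> \<le> L * (K * (x - s))"
      using x assms lipschitz_on_nonneg[OF assms(4)]
      by (intro mult_left_mono forward_solution_increment) auto
    also have "\<dots> \<le> L * K * (t - s)"
    proof -
      have "0 \<le> K" using assms(6)[of s] assms(3) norm_ge_zero order_trans by blast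
      then show ?thesis using x lipschitz_on_nonneg[OF assms(4)] by (simp add: mult_left_mono mult.assoc)
    qed
    finally show "norm (g (y x) - g (y s)) \<le> L * K * (t - s)" .
  qed (use assms(3) in \<open>auto simp: closed_segment_eq_real_ivl\<close>)
  then show ?thesis using assms(3) by (simp add: power2_eq_square mult_ac)
qed

lemma forward_solution_unique:
  fixes y1 y2 :: "real \<Rightarrow> 'b::real_inner"
  assumes "forward_solution g y1" "forward_solution g y2" "y1 0 = y2 0"
    and "L-lipschitz_on (cball 0 R) g"
    and "\<And>s. 0 \<le> s \<Longrightarrow> s \<le> t \<Longrightarrow> norm (y1 s) \<le> R \<and> norm (y2 s) \<le> R"
    and "0 \<le> t"
  shows "y1 t = y2 t"
proof -
  define e where "e s = y1 s - y2 s" for s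
  define \<psi> where "\<psi> s = exp (- (2 * L) * s) * (e s \<bullet> e s)" for s
  \<comment> \<open>Gronwall: the weighted squared distance \<psi> is non-increasing and vanishes initially.\<close>
  have "\<psi> t - \<psi> 0 \<le> 0 * (t - 0)"
  proof (rule deriv_le_imp_diff_le[OF assms(6)])
    fix s assume s: "0 \<le> s" "s \<le> t"
    let ?d = "g (y1 s) - g (y2 s)"
    have de: "(e has_vector_derivative ?d) (at s within {0..t})"
      unfolding e_def using s assms(1,2)
      by (intro has_vector_derivative_diff forward_solution_derivative) auto
    have dexp: "((\<lambda>s. exp (- (2 * L) * s)) has_vector_derivative exp (- (2 * L) * s) * (- (2 * L))) (at s within {0..t})"
      unfolding has_real_derivative_iff_has_vector_derivative[symmetric]
      by (auto intro!: derivative_eq_intros)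
    show "(\<psi> has_vector_derivative
        exp (- (2 * L) * s) * (e s \<bullet> ?d + ?d \<bullet> e s) + exp (- (2 * L) * s) * (- (2 * L)) * (e s \<bullet> e s))
        (at s within {0..t})"
      unfolding \<psi>_def
      by (rule has_vector_derivative_mult[OF dexp bounded_bilinear.has_vector_derivative[OF bounded_bilinear_inner de de]])
    have "e s \<bullet> ?d \<le> norm (e s) * norm ?d" by (rule norm_cauchy_schwarz)
    also have "\<dots> \<le> norm (e s) * (L * norm (e s))"
      using assms(5)[OF s] lipschitz_on_normD[OF assms(4), of "y1 s" "y2 s"]
      by (intro mult_left_mono) (auto simp: e_def)
    finally have "e s \<bullet> ?d + ?d \<bullet> e s - 2 * L * (e s \<bullet> e s) \<le> 0"
      by (simp add: inner_commute power2_norm_eq_inner[symmetric] power2_eq_square mult_ac)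
    then have "exp (- (2 * L) * s) * (e s \<bullet> ?d + ?d \<bullet> e s - 2 * L * (e s \<bullet> e s)) \<le> 0"
      by (simp add: mult_nonneg_nonpos)
    then show "exp (- (2 * L) * s) * (e s \<bullet> ?d + ?d \<bullet> e s) + exp (- (2 * L) * s) * (- (2 * L)) * (e s \<bullet> e s) \<le> 0"
      by (simp add: algebra_simps)
  qed
  then have "e t \<bullet> e t \<le> 0" using assms(3) by (simp add: \<psi>_def e_def mult_le_0_iff)
  then show ?thesis by (metis e_def inner_ge_zero inner_eq_zero_iff order_antisym right_minus_eq)
qed

lemma solution_semigroup_norm_le:
  fixes S :: "real \<Rightarrow> 'b::real_inner \<Rightarrow> 'b"
  assumes "solution_semigroup g S" "\<And>x. x \<bullet> g x \<le> C" "C \<ge> 0"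
    and "norm x \<le> R" "0 \<le> t" "t \<le> T"
  shows "norm (S t x) \<le> sqrt (R\<^sup>2 + 2 * C * T)"
proof (rule real_le_rsqrt)
  have "(norm (S t x))\<^sup>2 \<le> (norm x)\<^sup>2 + 2 * C * t"
    using forward_solution_norm_growth[of g "\<lambda>t. S t x", OF _ assms(2,5)] assms(1)
    by (simp add: solution_semigroup_iff)
  moreover have "(norm x)\<^sup>2 \<le> R\<^sup>2" using assms(4) by (intro power_mono) auto
  moreover have "2 * C * t \<le> 2 * C * T" using assms(3,6) by (intro mult_left_mono) auto
  ultimately show "(norm (S t x))\<^sup>2 \<le> R\<^sup>2 + 2 * C * T" by linarith
qed

lemma obtain_grid_time:
  assumes "k > 0" "T \<ge> 0"
  obtains M :: nat where "T \<le> real M * k" "real M * k \<le> T + k"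
proof
  define M where "M = nat \<lceil>T / k\<rceil>"
  have "real M = of_int \<lceil>T / k\<rceil>" using assms by (simp add: M_def)
  then have "T / k \<le> real M" "real M \<le> T / k + 1" by (simp_all add: ceiling_correct)
  then show "T \<le> real M * k" "real M * k \<le> T + k"
    using assms(1) by (simp_all add: field_simps)
qed

section \<open>Energy and error of BDF2\<close>

text \<open>The G-stability identity of BDF2; \<open>bdf2_energy\<close> below is the corresponding energy.\<close>

lemma bdf2_energy_identity:
  fixes a b c :: "'b::real_inner"
  shows "2 * ((3 *\<^sub>R a - 4 *\<^sub>R b + c) \<bullet> a)
    = (norm a)\<^sup>2 + (norm (2 *\<^sub>R a - b))\<^sup>2 - (norm b)\<^sup>2 - (norm (2 *\<^sub>R b - c))\<^sup>2
      + (norm (a - 2 *\<^sub>R b + c))\<^sup>2"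
  unfolding power2_norm_eq_inner
  by (simp add: inner_diff_left inner_diff_right inner_add_left inner_add_right
      inner_commute[of b a] inner_commute[of c a] inner_commute[of c b] algebra_simps)

definition bdf2_energy :: "(int \<Rightarrow> 'b::real_normed_vector) \<Rightarrow> int \<Rightarrow> real" where
  "bdf2_energy z m = (norm (z (m + 1)))\<^sup>2 + (norm (2 *\<^sub>R z (m + 1) - z m))\<^sup>2"

lemma bdf2_energy_le: "bdf2_energy z m \<le> 9 * ((norm (z (m + 1)))\<^sup>2 + (norm (z m))\<^sup>2)"
proof -
  have "norm (2 *\<^sub>R z (m + 1) - z m) \<le> 2 * norm (z (m + 1)) + norm (z m)"
    using norm_triangle_ineq4[of "2 *\<^sub>R z (m + 1)" "z m"] by simp
  then have "(norm (2 *\<^sub>R z (m + 1) - z m))\<^sup>2 \<le> (2 * norm (z (m + 1)) + norm (z m))\<^sup>2"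
    by (intro power_mono) auto
  also have "\<dots> \<le> 8 * (norm (z (m + 1)))\<^sup>2 + 2 * (norm (z m))\<^sup>2"
    using zero_le_power2[of "2 * norm (z (m + 1)) - norm (z m)"] by (simp add: power2_eq_square algebra_simps)
  finally show ?thesis
    unfolding bdf2_energy_def distrib_left using zero_le_power2[of "norm (z m)"] by linarith
qed

text \<open>Since \<open>3 z\<^sub>n\<^sub>+\<^sub>2 - 4 z\<^sub>n\<^sub>+\<^sub>1 + z\<^sub>n\<close> is the increment of \<open>3 z\<^sub>n\<^sub>+\<^sub>1 - z\<^sub>n\<close>, BDF2 is a one-step scheme for
  the latter quantity, which approximates \<open>2 y(t\<^sub>n)\<close>; its error is propagated by a discrete Gronwall
  argument.\<close>

definition bdf2_error :: "real \<Rightarrow> (int \<Rightarrow> 'b::real_vector) \<Rightarrow> (real \<Rightarrow> 'b) \<Rightarrow> nat \<Rightarrow> 'b" where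
  "bdf2_error k z y j = 3 *\<^sub>R z (int j + 1) - z (int j) - 2 *\<^sub>R y (real j * k)"

section \<open>The augmented system and its BDF2 discretisation\<close>

locale augmented_system =
  fixes A N :: "'a::euclidean_space \<Rightarrow> 'a" and F :: 'a and \<gamma> l0 :: real
  assumes A_lin: "bounded_linear A"
    and l0_pos: "l0 > 0"
    and A_coercive: "\<forall>u. A u \<bullet> u \<ge> l0 * (norm u)\<^sup>2"
    and N_loclip: "locally_lipschitz N"
    and N_orth: "\<forall>u. N u \<bullet> u = 0"
    and gamma_pos: "\<gamma> > 0"
begin

abbreviation aug :: "'a \<times> real \<Rightarrow> 'a \<times> real" where
  "aug \<equiv> aug_field A N F \<gamma>"

abbreviation nse :: "'a \<Rightarrow> 'a" where
  "nse \<equiv> nse_field A N F"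

text \<open>Both the augmented field and the BDF2 scheme have the form \<open>(F, \<gamma>) - coupling w p\<close>, with \<open>w\<close>
  the (possibly extrapolated) value of \<open>N\<close>; since \<open>w\<close> enters skew-symmetrically, \<open>coupling w\<close>
  is monotone whatever \<open>w\<close> is.\<close>

definition coupling :: "'a \<Rightarrow> 'a \<times> real \<Rightarrow> 'a \<times> real" where
  "coupling w p = (A (fst p) + snd p *\<^sub>R w, \<gamma> * snd p - w \<bullet> fst p)"

definition extrap_field :: "'a \<times> real \<Rightarrow> 'a \<times> real \<Rightarrow> 'a \<times> real \<Rightarrow> 'a \<times> real" where
  "extrap_field z0 z1 z2 = (F, \<gamma>) - coupling (N (2 *\<^sub>R fst z1 - fst z0)) z2"

lemma aug_eq_coupling: "aug p = (F, \<gamma>) - coupling (N (fst p)) p"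
  by (cases p) (simp add: aug_field_def coupling_def algebra_simps inner_commute)

lemma linear_coupling: "linear (coupling w)"
proof -
  have "linear A" using A_lin bounded_linear.linear by blast
  then show ?thesis
    by (intro linearI)
      (auto simp: coupling_def linear_add linear_scale inner_add_right algebra_simps)
qed

lemma inner_coupling: "p \<bullet> coupling w p = A (fst p) \<bullet> fst p + \<gamma> * (snd p)\<^sup>2"
  by (cases p) (simp add: coupling_def inner_add_right inner_commute power2_eq_square algebra_simps)

lemma coupling_monotone: "p \<bullet> coupling w p \<ge> 0"
  using A_coercive l0_pos gamma_pos unfolding inner_coupling
  by (smt (verit) mult_nonneg_nonneg zero_le_power2)

lemma norm_coupling_diff_le: "norm (coupling w p - coupling w' p) \<le> 2 * norm p * norm (w - w')"
proof -
  have "coupling w p - coupling w' p = (snd p *\<^sub>R (w - w'), - ((w - w') \<bullet> fst p))"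
    by (simp add: coupling_def algebra_simps inner_diff_left)
  then have "norm (coupling w p - coupling w' p) \<le> \<bar>snd p\<bar> * norm (w - w') + \<bar>(w - w') \<bullet> fst p\<bar>"
    using norm_Pair_le[of "snd p *\<^sub>R (w - w')" "- ((w - w') \<bullet> fst p)"] by simp
  also have "\<dots> \<le> \<bar>snd p\<bar> * norm (w - w') + norm (w - w') * norm (fst p)"
    using Cauchy_Schwarz_ineq2 by (rule add_left_mono)
  also have "\<dots> \<le> norm p * norm (w - w') + norm (w - w') * norm p"
    using norm_fst_le_norm[of p] norm_snd_le_norm[of p]
    by (intro add_mono mult_left_mono mult_right_mono) auto
  finally show ?thesis by simp
qed

definition c0 :: real where "c0 = min l0 \<gamma> / 2"
definition C0 :: real where "C0 = (norm F)\<^sup>2 / (2 * l0) + \<gamma> / 2"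

lemma c0_pos: "c0 > 0" using l0_pos gamma_pos by (simp add: c0_def)
lemma C0_nonneg: "C0 \<ge> 0" using l0_pos gamma_pos by (simp add: C0_def)

lemma energy_estimate: "p \<bullet> ((F, \<gamma>) - coupling w p) \<le> C0 - c0 * (norm p)\<^sup>2"
proof -
  obtain u q where p: "p = (u, q)" by (cases p)
  have "F \<bullet> u \<le> norm F * norm u" by (rule norm_cauchy_schwarz)
  also have "\<dots> \<le> (norm F)\<^sup>2 / (2 * l0) + l0 / 2 * (norm u)\<^sup>2"
  proof -
    have "2 * l0 * (norm F * norm u) \<le> (norm F)\<^sup>2 + l0\<^sup>2 * (norm u)\<^sup>2"
      using zero_le_power2[of "norm F - l0 * norm u"] by (simp add: power2_diff power_mult_distrib algebra_simps)
    then show ?thesis using l0_pos by (simp add: field_simps power2_eq_square)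
  qed
  finally have "F \<bullet> u \<le> (norm F)\<^sup>2 / (2 * l0) + l0 / 2 * (norm u)\<^sup>2" .
  moreover have "\<gamma> * q \<le> \<gamma> / 2 + \<gamma> / 2 * q\<^sup>2"
    using mult_nonneg_nonneg[OF less_imp_le[OF gamma_pos] zero_le_power2[of "q - 1"]]
    by (simp add: power2_diff algebra_simps)
  moreover have "c0 * (norm u)\<^sup>2 \<le> l0 / 2 * (norm u)\<^sup>2" "c0 * q\<^sup>2 \<le> \<gamma> / 2 * q\<^sup>2"
    by (intro mult_right_mono; simp add: c0_def)+
  moreover have "A u \<bullet> u \<ge> l0 * (norm u)\<^sup>2" using A_coercive by blast
  moreover have "p \<bullet> ((F, \<gamma>) - coupling w p) = F \<bullet> u + \<gamma> * q - A u \<bullet> u - \<gamma> * q\<^sup>2"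
    by (simp add: p inner_diff_right inner_coupling inner_commute[of u F])
  moreover have "(norm p)\<^sup>2 = (norm u)\<^sup>2 + q\<^sup>2" by (simp add: p norm_Pair)
  ultimately show ?thesis by (simp add: C0_def algebra_simps)
qed

lemma aug_energy: "p \<bullet> aug p \<le> C0"
  using energy_estimate[of p] c0_pos unfolding aug_eq_coupling
  by (smt (verit) mult_nonneg_nonneg zero_le_power2)

lemma extrap_field_energy: "z2 \<bullet> extrap_field z0 z1 z2 \<le> C0 - c0 * (norm z2)\<^sup>2"
  unfolding extrap_field_def by (rule energy_estimate)

lemma nse_energy: "u \<bullet> nse u \<le> C0"
proof -
  have "u \<bullet> N u = 0" using N_orth by (simp add: inner_commute)
  then have "u \<bullet> nse u = (u, 0) \<bullet> ((F, \<gamma>) - coupling w (u, 0))" for w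
    by (simp add: nse_field_def coupling_def inner_diff_right)
  then show ?thesis
    using energy_estimate[of "(u, 0)"] c0_pos by (smt (verit) mult_nonneg_nonneg zero_le_power2)
qed

lemma aug_lipschitz_on:
  assumes "compact K"
  obtains L where "L-lipschitz_on K aug"
proof -
  have "compact (fst ` K)" using assms by (intro compact_continuous_image continuous_intros)
  then obtain LN where "LN-lipschitz_on (fst ` K) N"
    using locally_lipschitz_lipschitz_on_compact[OF N_loclip] by blast
  then have NK: "(LN * 1)-lipschitz_on K (\<lambda>p. N (fst p))"
    by (rule lipschitz_on_compose2[OF lipschitz_on_fst])
  obtain LA where "LA-lipschitz_on UNIV A" by (rule bounded_linear.lipschitz_boundE[OF A_lin])
  then have AK: "(LA * 1)-lipschitz_on K (\<lambda>p. A (fst p))"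
    by (intro lipschitz_on_compose2[OF lipschitz_on_fst]) (auto intro: lipschitz_on_subset)
  obtain L1 where L1: "L1-lipschitz_on K (\<lambda>p. snd p *\<^sub>R N (fst p))"
    using bounded_bilinear_lipschitz_on[OF bounded_bilinear_scaleR assms lipschitz_on_snd NK] .
  obtain L2 where L2: "L2-lipschitz_on K (\<lambda>p. N (fst p) \<bullet> fst p)"
    using bounded_bilinear_lipschitz_on[OF bounded_bilinear_inner assms NK lipschitz_on_fst] .
  have aug: "aug = (\<lambda>p. (F - A (fst p) - snd p *\<^sub>R N (fst p), N (fst p) \<bullet> fst p - \<gamma> * snd p + \<gamma>))"
    by (auto simp: aug_field_def)
  show ?thesis
    by (rule that, unfold aug, (rule lipschitz_on_Pair lipschitz_on_diff lipschitz_on_add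
        lipschitz_on_constant lipschitz_on_cmult_real AK L1 L2 lipschitz_on_snd)+)
qed

lemma nse_lipschitz_on:
  assumes "compact K"
  obtains L where "L-lipschitz_on K nse"
proof -
  obtain LN where LN: "LN-lipschitz_on K N"
    using locally_lipschitz_lipschitz_on_compact[OF N_loclip assms] by blast
  obtain LA where "LA-lipschitz_on UNIV A" by (rule bounded_linear.lipschitz_boundE[OF A_lin])
  then have LA: "LA-lipschitz_on K A" by (rule lipschitz_on_subset) simp
  have nse: "nse = (\<lambda>u. F - A u - N u)" by (auto simp: nse_field_def)
  show ?thesis by (rule that, unfold nse, (rule lipschitz_on_diff lipschitz_on_constant LA LN)+)
qed

lemma extrap_field_consistent:
  obtains LR where "LR \<ge> 0"
    "\<And>z0 z1 z2. norm z0 \<le> R \<Longrightarrow> norm z1 \<le> R \<Longrightarrow> norm z2 \<le> R \<Longrightarrow>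
      norm (extrap_field z0 z1 z2 - aug z2) \<le> LR * (norm (z1 - z0) + norm (z2 - z1))"
proof -
  obtain LN where LN: "LN-lipschitz_on (cball 0 (3 * R)) N"
    using locally_lipschitz_lipschitz_on_compact[OF N_loclip compact_cball] by blast
  have LN0: "LN \<ge> 0" using LN by (rule lipschitz_on_nonneg)
  have "norm (extrap_field z0 z1 z2 - aug z2) \<le> (2 * \<bar>R\<bar> * LN) * (norm (z1 - z0) + norm (z2 - z1))"
    if z: "norm z0 \<le> R" "norm z1 \<le> R" "norm z2 \<le> R" for z0 z1 z2
  proof -
    define w where "w = 2 *\<^sub>R fst z1 - fst z0"
    have "norm w \<le> 2 * norm (fst z1) + norm (fst z0)"
      unfolding w_def using norm_triangle_ineq4[of "2 *\<^sub>R fst z1" "fst z0"] by simp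
    then have w: "norm w \<le> 3 * R" using z norm_fst_le_norm[of z0] norm_fst_le_norm[of z1] by simp
    have u2: "norm (fst z2) \<le> 3 * R"
      using z norm_fst_le_norm[of z2] norm_ge_zero[of z2] by linarith
    have "fst z2 - w = fst (z2 - z1) - fst (z1 - z0)" by (simp add: w_def algebra_simps scaleR_2)
    then have "norm (fst z2 - w) \<le> norm (fst (z2 - z1)) + norm (fst (z1 - z0))"
      by (metis norm_triangle_ineq4)
    then have d: "norm (fst z2 - w) \<le> norm (z1 - z0) + norm (z2 - z1)"
      using norm_fst_le_norm[of "z2 - z1"] norm_fst_le_norm[of "z1 - z0"] by linarith
    have "extrap_field z0 z1 z2 - aug z2 = coupling (N (fst z2)) z2 - coupling (N w) z2"
      by (simp add: extrap_field_def aug_eq_coupling w_def)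
    also have "norm \<dots> \<le> 2 * norm z2 * norm (N (fst z2) - N w)" by (rule norm_coupling_diff_le)
    also have "\<dots> \<le> 2 * \<bar>R\<bar> * (LN * norm (fst z2 - w))"
      using z(3) w u2 lipschitz_on_normD[OF LN, of "fst z2" w] by (intro mult_mono) auto
    also have "\<dots> \<le> 2 * \<bar>R\<bar> * (LN * (norm (z1 - z0) + norm (z2 - z1)))"
      using d LN0 by (intro mult_left_mono) auto
    finally show ?thesis by simp
  qed
  then show ?thesis using that[of "2 * \<bar>R\<bar> * LN"] LN0 by simp
qed

lemma bdf2_eqs_iff:
  assumes "k > 0"
  shows "bdf2_eqs A N F \<gamma> k (fst z0) (snd z0) (fst z1) (snd z1) (fst z2) (snd z2)
    \<longleftrightarrow> 3 *\<^sub>R z2 - 4 *\<^sub>R z1 + z0 = (2 * k) *\<^sub>R extrap_field z0 z1 z2"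
proof -
  define w where "w = N (2 *\<^sub>R fst z1 - fst z0)"
  have v: "(1 / (2 * k)) *\<^sub>R X + A u + q *\<^sub>R w = F \<longleftrightarrow> X = (2 * k) *\<^sub>R (F - (A u + q *\<^sub>R w))"
    for X u q using assms by (auto simp: add.assoc)
  have r: "x / (2 * k) + \<gamma> * q - w \<bullet> u = \<gamma> \<longleftrightarrow> x = (2 * k) * (\<gamma> - (\<gamma> * q - w \<bullet> u))"
    for x q u using assms by (auto simp: field_simps)
  have "bdf2_eqs A N F \<gamma> k (fst z0) (snd z0) (fst z1) (snd z1) (fst z2) (snd z2) \<longleftrightarrow>
      (1 / (2 * k)) *\<^sub>R (3 *\<^sub>R fst z2 - 4 *\<^sub>R fst z1 + fst z0) + A (fst z2) + snd z2 *\<^sub>R w = F \<and>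
      (3 * snd z2 - 4 * snd z1 + snd z0) / (2 * k) + \<gamma> * snd z2 - w \<bullet> fst z2 = \<gamma>"
    by (simp add: bdf2_eqs_def w_def)
  also have "\<dots> \<longleftrightarrow> 3 *\<^sub>R fst z2 - 4 *\<^sub>R fst z1 + fst z0 = (2 * k) *\<^sub>R (F - (A (fst z2) + snd z2 *\<^sub>R w)) \<and>
      3 * snd z2 - 4 * snd z1 + snd z0 = (2 * k) * (\<gamma> - (\<gamma> * snd z2 - w \<bullet> fst z2))"
    by (simp only: v r)
  also have "\<dots> \<longleftrightarrow> 3 *\<^sub>R z2 - 4 *\<^sub>R z1 + z0 = (2 * k) *\<^sub>R extrap_field z0 z1 z2"
    by (simp add: extrap_field_def coupling_def prod_eq_iff w_def)
  finally show ?thesis .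
qed

lemma bdf2_step_unique:
  assumes "k > 0"
  shows "\<exists>!z2. 3 *\<^sub>R z2 - 4 *\<^sub>R z1 + z0 = (2 * k) *\<^sub>R extrap_field z0 z1 z2"
proof -
  define w where "w = N (2 *\<^sub>R fst z1 - fst z0)"
  define L where "L p = 3 *\<^sub>R p + (2 * k) *\<^sub>R coupling w p" for p
  have eq: "3 *\<^sub>R z2 - 4 *\<^sub>R z1 + z0 = (2 * k) *\<^sub>R extrap_field z0 z1 z2 \<longleftrightarrow>
      L z2 = 4 *\<^sub>R z1 - z0 + (2 * k) *\<^sub>R (F, \<gamma>)" for z2
    by (auto simp: L_def extrap_field_def w_def algebra_simps)
  have lin: "linear L"
    by (intro linearI)
      (simp_all add: L_def linear_add[OF linear_coupling] linear_scale[OF linear_coupling] algebra_simps)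
  have "inj L"
    unfolding linear_injective_0[OF lin]
  proof (intro allI impI)
    fix p assume "L p = 0"
    moreover have "p \<bullet> L p = 3 * (norm p)\<^sup>2 + 2 * k * (p \<bullet> coupling w p)"
      by (simp add: L_def inner_add_right power2_norm_eq_inner)
    ultimately have "0 = 3 * (norm p)\<^sup>2 + 2 * k * (p \<bullet> coupling w p)" by simp
    then have "(norm p)\<^sup>2 \<le> 0" using assms coupling_monotone[of p w]
      by (smt (verit) mult_nonneg_nonneg)
    then show "p = 0" by simp
  qed
  then have "bij L" using linear_inj_imp_surj[OF lin] by (simp add: bij_def)
  then show ?thesis unfolding eq bij_iff by blast
qed

lemma bdf2_map_step:
  fixes z0 z1 :: "'a \<times> real"
  assumes "k > 0"
  defines "z2 \<equiv> snd (bdf2_map A N F \<gamma> k (z0, z1))"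
  shows "fst (bdf2_map A N F \<gamma> k (z0, z1)) = z1"
    and "3 *\<^sub>R z2 - 4 *\<^sub>R z1 + z0 = (2 * k) *\<^sub>R extrap_field z0 z1 z2"
proof -
  define P where "P p \<longleftrightarrow> bdf2_eqs A N F \<gamma> k (fst z0) (snd z0) (fst z1) (snd z1) (fst p) (snd p)" for p
  have map: "bdf2_map A N F \<gamma> k (z0, z1) = (z1, THE p. P p)"
    by (cases z0, cases z1) (simp add: bdf2_map_def P_def)
  have P: "P = (\<lambda>p. 3 *\<^sub>R p - 4 *\<^sub>R z1 + z0 = (2 * k) *\<^sub>R extrap_field z0 z1 p)"
    by (simp add: fun_eq_iff P_def bdf2_eqs_iff[OF assms(1)])
  have "\<exists>!p. P p" unfolding P by (rule bdf2_step_unique[OF assms(1)])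
  then have "P (THE p. P p)" by (rule theI')
  then show "fst (bdf2_map A N F \<gamma> k (z0, z1)) = z1"
    and "3 *\<^sub>R z2 - 4 *\<^sub>R z1 + z0 = (2 * k) *\<^sub>R extrap_field z0 z1 z2"
    unfolding z2_def map by (simp_all add: P)
qed

definition bdf2_orbit :: "real \<Rightarrow> (int \<Rightarrow> 'a \<times> real) \<Rightarrow> bool" where
  "bdf2_orbit k z \<longleftrightarrow>
    (\<forall>n. 3 *\<^sub>R z (n + 2) - 4 *\<^sub>R z (n + 1) + z n = (2 * k) *\<^sub>R extrap_field (z n) (z (n + 1)) (z (n + 2)))"

lemma bdf2_orbitD:
  assumes "bdf2_orbit k z"
  shows "3 *\<^sub>R z (n + 1) - 4 *\<^sub>R z n + z (n - 1) = (2 * k) *\<^sub>R extrap_field (z (n - 1)) (z n) (z (n + 1))"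
proof -
  have i: "n - 1 + 1 = n" "n - 1 + 2 = n + 1" by simp_all
  show ?thesis using assms[unfolded bdf2_orbit_def, rule_format, of "n - 1"] unfolding i .
qed

lemma global_attractor_obtain_bdf2_orbit:
  assumes "k > 0" "global_attractor_map (bdf2_map A N F \<gamma> k) X" "x \<in> X"
  obtains z B where "bdf2_orbit k z" "\<And>n. norm (z n) \<le> B" "z 0 = fst x" "z 1 = snd x"
proof -
  let ?T = "bdf2_map A N F \<gamma> k"
  have "?T ` X = X" and "compact X" using assms(2) unfolding global_attractor_map_def by auto
  obtain w :: "int \<Rightarrow> _" where w: "w 0 = x" "\<And>n. w n \<in> X" "\<And>n. ?T (w n) = w (n + 1)"
    using surj_on_obtain_biinfinite_orbit[OF \<open>?T ` X = X\<close> assms(3)] by blast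
  define z where "z n = fst (w n)" for n
  have wz: "w n = (z n, z (n + 1))" for n
    using bdf2_map_step(1)[OF assms(1), of "fst (w n)" "snd (w n)"] w(3)[of n]
    by (simp add: z_def prod_eq_iff)
  have "bdf2_orbit k z"
    unfolding bdf2_orbit_def
  proof
    fix n
    have "?T (z n, z (n + 1)) = (z (n + 1), z (n + 2))" using w(3)[of n] wz[of n] wz[of "n + 1"] by (simp add: add.assoc)
    then show "3 *\<^sub>R z (n + 2) - 4 *\<^sub>R z (n + 1) + z n = (2 * k) *\<^sub>R extrap_field (z n) (z (n + 1)) (z (n + 2))"
      using bdf2_map_step(2)[OF assms(1), of "z n" "z (n + 1)"] by simp
  qed
  moreover obtain B where B: "\<And>y. y \<in> X \<Longrightarrow> norm y \<le> B"
    using compact_imp_bounded[OF \<open>compact X\<close>] unfolding bounded_iff by blast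
  have "norm (z n) \<le> B" for n
    using order_trans[OF norm_fst_le_norm[of "w n"] B[OF w(2)]] by (simp add: z_def)
  moreover have "z 0 = fst x" "z 1 = snd x" using w(1) wz[of 0] by auto
  ultimately show ?thesis using that by blast
qed

lemma bdf2_energy_step:
  assumes "k > 0" "bdf2_orbit k z"
  shows "bdf2_energy z m - bdf2_energy z (m - 1) \<le> 4 * k * (C0 - c0 * (norm (z (m + 1)))\<^sup>2)"
proof -
  let ?G = "extrap_field (z (m - 1)) (z m) (z (m + 1))"
  have "bdf2_energy z m - bdf2_energy z (m - 1) + (norm (z (m + 1) - 2 *\<^sub>R z m + z (m - 1)))\<^sup>2
      = 2 * ((3 *\<^sub>R z (m + 1) - 4 *\<^sub>R z m + z (m - 1)) \<bullet> z (m + 1))"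
    using bdf2_energy_identity[of "z (m + 1)" "z m" "z (m - 1)"] by (simp add: bdf2_energy_def)
  also have "\<dots> = 4 * k * (z (m + 1) \<bullet> ?G)"
    unfolding bdf2_orbitD[OF assms(2)] by (simp add: inner_commute)
  also have "\<dots> \<le> 4 * k * (C0 - c0 * (norm (z (m + 1)))\<^sup>2)"
    using assms(1) extrap_field_energy by (intro mult_left_mono) auto
  finally show ?thesis by (smt (verit) zero_le_power2)
qed

definition absorbing_radius :: real where
  "absorbing_radius = sqrt (18 * C0 / c0)"

lemma bdf2_orbit_absorbed:
  assumes "k > 0" "bdf2_orbit k z" "\<And>n. norm (z n) \<le> B"
  shows "norm (z n) \<le> absorbing_radius"
proof -
  define \<alpha> where "\<alpha> = 4 * k * c0 / 9"
  have \<alpha>: "\<alpha> > 0" using assms(1) c0_pos by (simp add: \<alpha>_def)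
  \<comment> \<open>Two consecutive energy steps control the energy itself, which then contracts by \<open>1 + \<alpha>\<close>.\<close>
  have "bdf2_energy z m * (1 + \<alpha>) \<le> bdf2_energy z (m - 2) + 8 * k * C0" for m
  proof -
    have "m - 1 - 1 = m - 2" "m - 1 + 1 = m" by simp_all
    then have "bdf2_energy z (m - 1) - bdf2_energy z (m - 2) \<le> 4 * k * (C0 - c0 * (norm (z m))\<^sup>2)"
      using bdf2_energy_step[OF assms(1,2), of "m - 1"] by simp
    moreover have "\<alpha> * (9 * X) = 4 * k * c0 * X" for X by (simp add: \<alpha>_def)
    then have "\<alpha> * bdf2_energy z m \<le> 4 * k * c0 * ((norm (z (m + 1)))\<^sup>2 + (norm (z m))\<^sup>2)"
      using mult_left_mono[OF bdf2_energy_le[of z m] less_imp_le[OF \<alpha>]] by metis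
    ultimately show ?thesis using bdf2_energy_step[OF assms(1,2), of m] by (simp add: algebra_simps)
  qed
  moreover have "bdd_above (range (bdf2_energy z))"
  proof (rule bdd_aboveI2)
    fix m
    have "(norm (z (m + 1)))\<^sup>2 \<le> B\<^sup>2" "(norm (z m))\<^sup>2 \<le> B\<^sup>2"
      using assms(3) by (intro power_mono; simp)+
    then show "bdf2_energy z m \<le> 9 * (B\<^sup>2 + B\<^sup>2)"
      using bdf2_energy_le[of z m] by simp
  qed
  ultimately have "bdf2_energy z (n - 1) \<le> 8 * k * C0 / \<alpha>"
    using \<alpha> by (intro bounded_recursion_le[where p = 2]) auto
  also have "\<dots> = 18 * C0 / c0" using assms(1) c0_pos by (simp add: \<alpha>_def field_simps)
  finally have "(norm (z n))\<^sup>2 + (norm (2 *\<^sub>R z n - z (n - 1)))\<^sup>2 \<le> 18 * C0 / c0"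
    by (simp add: bdf2_energy_def)
  then have "(norm (z n))\<^sup>2 \<le> 18 * C0 / c0"
    using zero_le_power2[of "norm (2 *\<^sub>R z n - z (n - 1))"] by linarith
  then show ?thesis unfolding absorbing_radius_def by (rule real_le_rsqrt)
qed

lemma extrap_field_bounded:
  obtains GB where "GB \<ge> 0"
    "\<And>z0 z1 z2. norm z0 \<le> R \<Longrightarrow> norm z1 \<le> R \<Longrightarrow> norm z2 \<le> R \<Longrightarrow> norm (extrap_field z0 z1 z2) \<le> GB"
proof -
  obtain LR where LR: "LR \<ge> 0"
    "\<And>z0 z1 z2. norm z0 \<le> R \<Longrightarrow> norm z1 \<le> R \<Longrightarrow> norm z2 \<le> R \<Longrightarrow>
      norm (extrap_field z0 z1 z2 - aug z2) \<le> LR * (norm (z1 - z0) + norm (z2 - z1))"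
    using extrap_field_consistent[where R = R] by blast
  obtain L where "L-lipschitz_on (cball 0 R) aug" using aug_lipschitz_on[OF compact_cball] .
  then obtain K where K: "K \<ge> 0" "\<And>x. norm x \<le> R \<Longrightarrow> norm (aug x) \<le> K"
    using lipschitz_on_compact_imp_bounded[OF _ compact_cball] by (metis mem_cball_0)
  have "norm (extrap_field z0 z1 z2) \<le> K + LR * (4 * \<bar>R\<bar>)"
    if z: "norm z0 \<le> R" "norm z1 \<le> R" "norm z2 \<le> R" for z0 z1 z2
  proof -
    have "norm (z1 - z0) + norm (z2 - z1) \<le> 4 * \<bar>R\<bar>"
      using z norm_triangle_ineq4[of z1 z0] norm_triangle_ineq4[of z2 z1] by linarith
    then have "norm (extrap_field z0 z1 z2 - aug z2) \<le> LR * (4 * \<bar>R\<bar>)"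
      using LR(2)[OF z] LR(1) by (meson mult_left_mono order_trans)
    then show ?thesis using K(2)[OF z(3)] norm_triangle_sub[of "extrap_field z0 z1 z2" "aug z2"] by linarith
  qed
  then show ?thesis using that[of "K + LR * (4 * \<bar>R\<bar>)"] K(1) LR(1) by simp
qed

lemma bdf2_orbit_increment_le:
  assumes "k > 0" "bdf2_orbit k z" "\<And>n. norm (z n) \<le> R"
    and "\<And>n. norm (extrap_field (z n) (z (n + 1)) (z (n + 2))) \<le> GB"
  shows "norm (z (n + 1) - z n) \<le> k * GB"
proof -
  define x where "x m = norm (z (m + 1) - z m)" for m
  have "x m * (1 + 2) \<le> x (m - 1) + 2 * k * GB" for m
  proof -
    have "4 *\<^sub>R z m = 3 *\<^sub>R z m + z m" using scaleR_left_distrib[of 3 1 "z m"] by simp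
    then have "3 *\<^sub>R (z (m + 1) - z m) = (z m - z (m - 1)) + (3 *\<^sub>R z (m + 1) - 4 *\<^sub>R z m + z (m - 1))"
      by (simp add: algebra_simps)
    also have "\<dots> = (z m - z (m - 1)) + (2 * k) *\<^sub>R extrap_field (z (m - 1)) (z m) (z (m + 1))"
      unfolding bdf2_orbitD[OF assms(2)] ..
    finally have "norm (3 *\<^sub>R (z (m + 1) - z m))
        \<le> norm (z m - z (m - 1)) + norm ((2 * k) *\<^sub>R extrap_field (z (m - 1)) (z m) (z (m + 1)))"
      by (metis norm_triangle_ineq)
    then have "3 * x m \<le> x (m - 1) + 2 * k * norm (extrap_field (z (m - 1)) (z m) (z (m + 1)))"
      using assms(1) by (simp add: x_def)
    moreover have i: "m - 1 + 1 = m" "m - 1 + 2 = m + 1" by simp_all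
    have "norm (extrap_field (z (m - 1)) (z m) (z (m + 1))) \<le> GB" using assms(4)[of "m - 1"] unfolding i .
    then have "2 * k * norm (extrap_field (z (m - 1)) (z m) (z (m + 1))) \<le> 2 * k * GB"
      using assms(1) by (intro mult_left_mono) auto
    ultimately show ?thesis by simp
  qed
  moreover have "bdd_above (range x)"
  proof (rule bdd_aboveI2)
    fix m show "x m \<le> 2 * R"
      using assms(3)[of m] assms(3)[of "m + 1"] norm_triangle_ineq4[of "z (m + 1)" "z m"] by (simp add: x_def)
  qed
  ultimately have "x n \<le> 2 * k * GB / 2" by (intro bounded_recursion_le[where p = 1]) auto
  then show ?thesis by (simp add: x_def)
qed

subsection \<open>Comparison of BDF2 orbits with the flow\<close>

lemma bdf2_orbit_shift:
  assumes "bdf2_orbit k z"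
  shows "bdf2_orbit k (\<lambda>n. z (n + a))"
  unfolding bdf2_orbit_def
proof
  fix n
  have i: "n + 1 + a = n + a + 1" "n + 2 + a = n + a + 2" by simp_all
  show "3 *\<^sub>R z (n + 2 + a) - 4 *\<^sub>R z (n + 1 + a) + z (n + a)
      = (2 * k) *\<^sub>R extrap_field (z (n + a)) (z (n + 1 + a)) (z (n + 2 + a))"
    using assms[unfolded bdf2_orbit_def, rule_format, of "n + a"] unfolding i .
qed

context
  fixes k Rz R1 L K LR GB Th :: real and z :: "int \<Rightarrow> 'a \<times> real" and y :: "real \<Rightarrow> 'a \<times> real"
  assumes k_pos: "k > 0" and orbit: "bdf2_orbit k z" and z_bound: "\<And>n. norm (z n) \<le> Rz"
    and increment: "\<And>n. norm (z (n + 1) - z n) \<le> k * GB" and GB_nonneg: "GB \<ge> 0"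
    and consistent: "\<And>z0 z1 z2. norm z0 \<le> Rz \<Longrightarrow> norm z1 \<le> Rz \<Longrightarrow> norm z2 \<le> Rz \<Longrightarrow>
      norm (extrap_field z0 z1 z2 - aug z2) \<le> LR * (norm (z1 - z0) + norm (z2 - z1))"
    and LR_nonneg: "LR \<ge> 0"
    and Rz_le: "Rz \<le> R1" and lipschitz: "L-lipschitz_on (cball 0 R1) aug"
    and aug_bound: "\<And>x. norm x \<le> R1 \<Longrightarrow> norm (aug x) \<le> K"
    and solution: "forward_solution aug y" and y0: "y 0 = z 0"
    and y_bound: "\<And>t. 0 \<le> t \<Longrightarrow> t \<le> Th \<Longrightarrow> norm (y t) \<le> R1"
begin

lemma L_nonneg: "L \<ge> 0"
  using lipschitz by (rule lipschitz_on_nonneg)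

lemma K_nonneg: "K \<ge> 0"
proof -
  have "0 \<le> R1" using Rz_le z_bound[of 0] norm_ge_zero[of "z 0"] by linarith
  then have "norm (0 :: 'a \<times> real) \<le> R1" by simp
  then show ?thesis using aug_bound norm_ge_zero order_trans by blast
qed

lemma aug_lipschitz_bound:
  "norm x \<le> R1 \<Longrightarrow> norm x' \<le> R1 \<Longrightarrow> norm (aug x - aug x') \<le> L * norm (x - x')"
  by (rule lipschitz_on_normD[OF lipschitz]) auto

lemma orbit_solution_dist_le:
  "norm (z (int j) - y (real j * k)) \<le> (norm (bdf2_error k z y j) + 3 * k * GB) / 2"
proof -
  have "2 *\<^sub>R (z (int j) - y (real j * k)) = bdf2_error k z y j - 3 *\<^sub>R (z (int j + 1) - z (int j))"
    using scaleR_left_distrib[of 2 1 "z (int j)"] by (simp add: bdf2_error_def algebra_simps)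
  then have "norm (2 *\<^sub>R (z (int j) - y (real j * k)))
      \<le> norm (bdf2_error k z y j) + norm (3 *\<^sub>R (z (int j + 1) - z (int j)))"
    by (metis norm_triangle_ineq4)
  then have "2 * norm (z (int j) - y (real j * k)) \<le> norm (bdf2_error k z y j) + 3 * norm (z (int j + 1) - z (int j))"
    by simp
  then show ?thesis using increment[of "int j"] by simp
qed

lemma bdf2_error_Suc:
  "bdf2_error k z y (Suc j) = bdf2_error k z y j
    + (2 * k) *\<^sub>R (extrap_field (z (int j)) (z (int j + 1)) (z (int j + 2)) - aug (y (real j * k)))
    - 2 *\<^sub>R (y (real (Suc j) * k) - y (real j * k) - k *\<^sub>R aug (y (real j * k)))"
proof -
  have "bdf2_error k z y (Suc j) = bdf2_error k z y j
      + (3 *\<^sub>R z (int j + 2) - 4 *\<^sub>R z (int j + 1) + z (int j)) - 2 *\<^sub>R (y (real (Suc j) * k) - y (real j * k))"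
    using scaleR_left_distrib[of 3 1 "z (int j + 1)"] by (simp add: bdf2_error_def algebra_simps)
  also have "3 *\<^sub>R z (int j + 2) - 4 *\<^sub>R z (int j + 1) + z (int j)
      = (2 * k) *\<^sub>R extrap_field (z (int j)) (z (int j + 1)) (z (int j + 2))"
    using orbit unfolding bdf2_orbit_def by blast
  finally show ?thesis by (simp add: algebra_simps)
qed

lemma extrap_field_defect_le:
  assumes "real j * k \<le> Th"
  shows "norm (extrap_field (z (int j)) (z (int j + 1)) (z (int j + 2)) - aug (y (real j * k)))
    \<le> (LR + L) * (2 * k * GB) + L * ((norm (bdf2_error k z y j) + 3 * k * GB) / 2)"
proof -
  define n where "n = int j"
  define G where "G = extrap_field (z n) (z (n + 1)) (z (n + 2))"
  let ?y = "y (real j * k)"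
  have zR1: "norm (z m) \<le> R1" for m using z_bound[of m] Rz_le by linarith
  have incr2: "norm (z (n + 1) - z n) + norm (z (n + 2) - z (n + 1)) \<le> 2 * k * GB"
    using increment[of n] increment[of "n + 1"] by (simp add: add.assoc)
  have "norm (G - aug (z (n + 2))) \<le> LR * (norm (z (n + 1) - z n) + norm (z (n + 2) - z (n + 1)))"
    unfolding G_def by (rule consistent[OF z_bound z_bound z_bound])
  also have "\<dots> \<le> LR * (2 * k * GB)" using incr2 LR_nonneg by (rule mult_left_mono)
  finally have G1: "norm (G - aug (z (n + 2))) \<le> LR * (2 * k * GB)" .
  have "norm (z (n + 2) - z n) \<le> norm (z (n + 2) - z (n + 1)) + norm (z (n + 1) - z n)"
    using norm_triangle_ineq[of "z (n + 2) - z (n + 1)" "z (n + 1) - z n"] by simp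
  then have "norm (z (n + 2) - z n) \<le> 2 * k * GB" using incr2 by linarith
  then have G2: "norm (aug (z (n + 2)) - aug (z n)) \<le> L * (2 * k * GB)"
    using aug_lipschitz_bound[OF zR1 zR1, of "n + 2" n] L_nonneg by (meson mult_left_mono order_trans)
  have "0 \<le> real j * k" using k_pos by simp
  then have G3: "norm (aug (z n) - aug ?y) \<le> L * ((norm (bdf2_error k z y j) + 3 * k * GB) / 2)"
    using aug_lipschitz_bound[OF zR1 y_bound[OF _ assms], of n] orbit_solution_dist_le[of j] L_nonneg
    unfolding n_def by (meson mult_left_mono order_trans)
  have "norm (G - aug ?y) = norm ((G - aug (z (n + 2))) + (aug (z (n + 2)) - aug (z n)) + (aug (z n) - aug ?y))"
    by simp
  then have "norm (G - aug ?y)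
      \<le> norm (G - aug (z (n + 2))) + norm (aug (z (n + 2)) - aug (z n)) + norm (aug (z n) - aug ?y)"
    using norm_triangle_ineq[of "G - aug (z (n + 2)) + (aug (z (n + 2)) - aug (z n))" "aug (z n) - aug ?y"]
      norm_triangle_ineq[of "G - aug (z (n + 2))" "aug (z (n + 2)) - aug (z n)"] by linarith
  then have "norm (G - aug ?y) \<le> LR * (2 * k * GB) + L * (2 * k * GB) + L * ((norm (bdf2_error k z y j) + 3 * k * GB) / 2)"
    using G1 G2 G3 by linarith
  then show ?thesis unfolding G_def n_def by (simp only: distrib_right)
qed

lemma bdf2_error_step:
  assumes "real (Suc j) * k \<le> Th"
  shows "norm (bdf2_error k z y (Suc j))
    \<le> (1 + k * L) * norm (bdf2_error k z y j) + k\<^sup>2 * (4 * LR * GB + 7 * L * GB + 2 * L * K)"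
proof -
  define e where "e = norm (bdf2_error k z y j)"
  define D where "D = extrap_field (z (int j)) (z (int j + 1)) (z (int j + 2)) - aug (y (real j * k))"
  define Y where "Y = y (real (Suc j) * k) - y (real j * k) - k *\<^sub>R aug (y (real j * k))"
  have t: "0 \<le> real j * k" "real j * k \<le> real (Suc j) * k" using k_pos by simp_all
  have "norm (bdf2_error k z y (Suc j)) \<le> norm (bdf2_error k z y j + (2 * k) *\<^sub>R D) + norm (2 *\<^sub>R Y)"
    unfolding bdf2_error_Suc D_def[symmetric] Y_def[symmetric] by (rule norm_triangle_ineq4)
  also have "\<dots> \<le> e + norm ((2 * k) *\<^sub>R D) + norm (2 *\<^sub>R Y)"
    unfolding e_def by (intro add_right_mono norm_triangle_ineq)
  also have "\<dots> = e + 2 * k * norm D + 2 * norm Y" using k_pos by simp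
  also have "\<dots> \<le> e + 2 * k * ((LR + L) * (2 * k * GB) + L * ((e + 3 * k * GB) / 2)) + 2 * (L * K * k\<^sup>2)"
  proof -
    have "norm D \<le> (LR + L) * (2 * k * GB) + L * ((e + 3 * k * GB) / 2)"
      using extrap_field_defect_le assms t unfolding D_def e_def by auto
    moreover have "norm Y \<le> L * K * k\<^sup>2"
      using forward_solution_linearization[OF solution t lipschitz, of K] y_bound aug_bound assms t
      by (simp add: Y_def algebra_simps)
    ultimately show ?thesis using k_pos by (intro add_mono mult_left_mono order_refl) auto
  qed
  also have "\<dots> = (1 + k * L) * e + k\<^sup>2 * (4 * LR * GB + 7 * L * GB + 2 * L * K)"
    by (simp add: algebra_simps power2_eq_square)
  finally show ?thesis by (simp add: e_def)
qed

lemma bdf2_orbit_near_solution: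
  assumes "real M * k \<le> Th"
  shows "norm (z (int M) - y (real M * k))
    \<le> k * (exp (L * Th) * (3 * GB + Th * (4 * LR * GB + 7 * L * GB + 2 * L * K)) + 3 * GB)"
proof -
  define c where "c = 4 * LR * GB + 7 * L * GB + 2 * L * K"
  have c: "c \<ge> 0" using L_nonneg K_nonneg LR_nonneg GB_nonneg by (simp add: c_def)
  have E0: "norm (bdf2_error k z y 0) \<le> 3 * k * GB"
  proof -
    have "bdf2_error k z y 0 = 3 *\<^sub>R (z 1 - z 0)"
      using scaleR_left_distrib[of 2 1 "z 0"] by (simp add: bdf2_error_def y0 algebra_simps)
    then show ?thesis using increment[of 0] by simp
  qed
  have "norm (bdf2_error k z y M) \<le> exp (real M * (k * L)) * (norm (bdf2_error k z y 0) + real M * (k\<^sup>2 * c))"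
  proof (rule discrete_gronwall)
    fix j assume "j < M"
    then have "real (Suc j) * k \<le> Th"
      using assms k_pos by (smt (verit) Suc_leI mult_right_mono of_nat_le_iff)
    then show "norm (bdf2_error k z y (Suc j)) \<le> (1 + k * L) * norm (bdf2_error k z y j) + k\<^sup>2 * c"
      unfolding c_def by (rule bdf2_error_step)
  qed (use k_pos L_nonneg c in auto)
  also have "\<dots> \<le> exp (L * Th) * (3 * k * GB + k * (Th * c))"
  proof (rule mult_mono)
    have "real M * (k * L) \<le> Th * L" using assms L_nonneg by (simp add: mult.assoc[symmetric] mult_right_mono)
    then show "exp (real M * (k * L)) \<le> exp (L * Th)" by (simp add: mult.commute)
    have "real M * (k\<^sup>2 * c) = k * ((real M * k) * c)" by (simp add: power2_eq_square)
    also have "\<dots> \<le> k * (Th * c)" using assms c k_pos by (intro mult_left_mono mult_right_mono) auto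
    finally show "norm (bdf2_error k z y 0) + real M * (k\<^sup>2 * c) \<le> 3 * k * GB + k * (Th * c)"
      using E0 by linarith
  qed (use k_pos c in auto)
  finally have "norm (bdf2_error k z y M) \<le> k * (exp (L * Th) * (3 * GB + Th * c))"
    by (simp add: algebra_simps)
  moreover have "0 \<le> 3 * k * GB" using k_pos GB_nonneg by simp
  ultimately have "norm (z (int M) - y (real M * k)) \<le> k * (exp (L * Th) * (3 * GB + Th * c)) + 3 * k * GB"
    using orbit_solution_dist_le[of M] norm_ge_zero[of "bdf2_error k z y M"] by argo
  also have "\<dots> = k * (exp (L * Th) * (3 * GB + Th * c) + 3 * GB)" by (simp add: algebra_simps)
  finally show ?thesis unfolding c_def .
qed

end

lemma bdf2_finite_time_error:
  assumes Sq: "solution_semigroup aug Sq" and Th: "Th \<ge> 0"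
  obtains C where "C \<ge> 0"
    "\<And>k z M. 0 < k \<Longrightarrow> bdf2_orbit k z \<Longrightarrow> (\<And>n. norm (z n) \<le> absorbing_radius) \<Longrightarrow> real M * k \<le> Th \<Longrightarrow>
      norm (z (int M) - Sq (real M * k) (z 0)) \<le> k * C"
proof -
  define R1 where "R1 = sqrt (absorbing_radius\<^sup>2 + 2 * C0 * Th)"
  have R1: "absorbing_radius \<le> R1" unfolding R1_def using C0_nonneg Th by (intro real_le_rsqrt) simp
  obtain L where L: "L-lipschitz_on (cball 0 R1) aug" using aug_lipschitz_on[OF compact_cball] .
  obtain K where K: "K \<ge> 0" "\<And>x. norm x \<le> R1 \<Longrightarrow> norm (aug x) \<le> K"
    using lipschitz_on_compact_imp_bounded[OF L compact_cball] by (metis mem_cball_0)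
  obtain LR where LR: "LR \<ge> 0"
    "\<And>z0 z1 z2. norm z0 \<le> absorbing_radius \<Longrightarrow> norm z1 \<le> absorbing_radius \<Longrightarrow> norm z2 \<le> absorbing_radius \<Longrightarrow>
      norm (extrap_field z0 z1 z2 - aug z2) \<le> LR * (norm (z1 - z0) + norm (z2 - z1))"
    using extrap_field_consistent[where R = absorbing_radius] by blast
  obtain GB where GB: "GB \<ge> 0"
    "\<And>z0 z1 z2. norm z0 \<le> absorbing_radius \<Longrightarrow> norm z1 \<le> absorbing_radius \<Longrightarrow> norm z2 \<le> absorbing_radius \<Longrightarrow>
      norm (extrap_field z0 z1 z2) \<le> GB"
    using extrap_field_bounded[where R = absorbing_radius] by blast
  define C where "C = exp (L * Th) * (3 * GB + Th * (4 * LR * GB + 7 * L * GB + 2 * L * K)) + 3 * GB"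
  have "C \<ge> 0" using lipschitz_on_nonneg[OF L] K(1) LR(1) GB(1) Th by (simp add: C_def)
  moreover have "norm (z (int M) - Sq (real M * k) (z 0)) \<le> k * C"
    if k: "0 < k" and orbit: "bdf2_orbit k z" and zb: "\<And>n. norm (z n) \<le> absorbing_radius"
      and M: "real M * k \<le> Th" for k z M
  proof -
    have sol: "forward_solution aug (\<lambda>t. Sq t (z 0))" and y0: "Sq 0 (z 0) = z 0"
      using Sq unfolding solution_semigroup_iff by blast+
    have "norm (Sq t (z 0)) \<le> R1" if "0 \<le> t" "t \<le> Th" for t
      unfolding R1_def by (rule solution_semigroup_norm_le[OF Sq aug_energy C0_nonneg zb that])
    moreover have "norm (z (n + 1) - z n) \<le> k * GB" for n
      using bdf2_orbit_increment_le[OF k orbit zb] GB(2)[OF zb zb zb] by blast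
    ultimately show ?thesis
      using bdf2_orbit_near_solution[OF k orbit zb _ GB(1) LR(2) LR(1) R1 L K(2) sol y0 _ M]
      by (simp add: C_def)
  qed
  ultimately show ?thesis using that by blast
qed

subsection \<open>The attractor of the augmented flow\<close>

lemma aug_flow_snd:
  assumes Sq: "solution_semigroup aug Sq" and t: "t \<ge> 0"
  shows "(snd (Sq t x) - 1) * exp (\<gamma> * t) = snd x - 1"
proof -
  define \<psi> where "\<psi> s = (snd (Sq s x) - 1) * exp (\<gamma> * s)" for s
  have "(\<psi> has_derivative (\<lambda>h. 0)) (at s within {0..})" if s: "s \<in> {0..}" for s
  proof -
    have "forward_solution aug (\<lambda>s. Sq s x)" using Sq unfolding solution_semigroup_iff by blast
    then have "((\<lambda>s. Sq s x) has_vector_derivative aug (Sq s x)) (at s within {0..})"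
      using s by (intro forward_solution_derivative) auto
    then have "((\<lambda>s. snd (Sq s x) - 1) has_vector_derivative \<gamma> - \<gamma> * snd (Sq s x)) (at s within {0..})"
      using N_orth by (cases "Sq s x")
        (auto simp: aug_field_def intro!: derivative_eq_intros
          bounded_linear.has_vector_derivative[OF bounded_linear_snd])
    moreover have "((\<lambda>s. exp (\<gamma> * s)) has_vector_derivative exp (\<gamma> * s) * \<gamma>) (at s within {0..})"
      unfolding has_real_derivative_iff_has_vector_derivative[symmetric]
      by (auto intro!: derivative_eq_intros)
    ultimately have "(\<psi> has_vector_derivative
        (snd (Sq s x) - 1) * (exp (\<gamma> * s) * \<gamma>) + (\<gamma> - \<gamma> * snd (Sq s x)) * exp (\<gamma> * s)) (at s within {0..})"
      unfolding \<psi>_def by (rule has_vector_derivative_mult)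
    then show ?thesis by (simp add: has_vector_derivative_def algebra_simps)
  qed
  then obtain c where "\<forall>s\<in>{0..}. \<psi> s = c" using has_derivative_zero_constant[of "{0..}" \<psi>] by auto
  then have "\<psi> t = \<psi> 0" using t by simp
  moreover have "Sq 0 x = x" using Sq unfolding solution_semigroup_iff by blast
  ultimately show ?thesis by (simp add: \<psi>_def)
qed

lemma aug_attractor_snd:
  assumes Sq: "solution_semigroup aug Sq" and G: "global_attractor_flow Sq Att_q" and p: "p \<in> Att_q"
  shows "snd p = 1"
proof (rule ccontr)
  assume ne: "snd p \<noteq> 1"
  \<comment> \<open>Backward in time \<open>q - 1\<close> grows like \<open>exp (\<gamma> t)\<close>, which the compact invariant set cannot accommodate.\<close>
  have inv: "\<And>t. t \<ge> 0 \<Longrightarrow> Sq t ` Att_q = Att_q" and "compact Att_q"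
    using G unfolding global_attractor_flow_def by auto
  then obtain B where B: "B \<ge> 0" "\<And>x. x \<in> Att_q \<Longrightarrow> norm x \<le> B"
    using compact_imp_bounded[of Att_q] unfolding bounded_iff by (meson norm_ge_zero order_trans p)
  define \<delta> where "\<delta> = \<bar>snd p - 1\<bar>"
  have \<delta>: "\<delta> > 0" using ne by (simp add: \<delta>_def)
  define t where "t = (B + 1) / (\<gamma> * \<delta>)"
  have t0: "t \<ge> 0" using B \<delta> gamma_pos by (simp add: t_def)
  obtain x where x: "x \<in> Att_q" "Sq t x = p" using inv[OF t0] p by (metis imageE)
  have "\<delta> * exp (\<gamma> * t) = \<bar>snd x - 1\<bar>"
    using arg_cong[OF aug_flow_snd[OF Sq t0, of x], of abs] x by (simp add: \<delta>_def abs_mult)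
  also have "\<dots> \<le> B + 1" using B(2)[OF x(1)] norm_snd_le_norm[of x] by simp
  finally have "\<delta> * exp (\<gamma> * t) \<le> B + 1" .
  moreover have "\<delta> * (1 + \<gamma> * t) \<le> \<delta> * exp (\<gamma> * t)" using \<delta> by (intro mult_left_mono) auto
  moreover have "\<delta> * (1 + \<gamma> * t) = \<delta> + (B + 1)" using \<delta> gamma_pos by (simp add: t_def field_simps)
  ultimately show False using \<delta> by linarith
qed

lemma aug_flow_fst:
  assumes Sq: "solution_semigroup aug Sq" and S: "solution_semigroup nse S"
    and "snd x = 1" "t \<ge> 0"
  shows "fst (Sq t x) = S t (fst x)"
proof -
  define R where "R = sqrt ((norm x)\<^sup>2 + 2 * C0 * t)"
  obtain L where L: "L-lipschitz_on (cball 0 R) nse" using nse_lipschitz_on[OF compact_cball] .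
  have solq: "forward_solution aug (\<lambda>s. Sq s x)" "Sq 0 x = x"
    using Sq unfolding solution_semigroup_iff by blast+
  have "forward_solution nse (\<lambda>s. fst (Sq s x))"
    unfolding forward_solution_def
  proof (intro allI impI)
    fix s :: real assume "s \<ge> 0"
    then have "snd (Sq s x) = 1" using aug_flow_snd[OF Sq, of s x] assms(3) by simp
    then have "fst (aug (Sq s x)) = nse (fst (Sq s x))"
      by (cases "Sq s x") (simp add: aug_field_def nse_field_def)
    moreover have "((\<lambda>s. fst (Sq s x)) has_vector_derivative fst (aug (Sq s x))) (at s within {0..})"
      using \<open>s \<ge> 0\<close> solq(1) by (intro bounded_linear.has_vector_derivative[OF bounded_linear_fst]
        forward_solution_derivative) auto
    ultimately show "((\<lambda>s. fst (Sq s x)) has_vector_derivative nse (fst (Sq s x))) (at s within {0..})"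
      by simp
  qed
  moreover have "forward_solution nse (\<lambda>s. S s (fst x))" "S 0 (fst x) = fst (Sq 0 x)"
    using S solq(2) unfolding solution_semigroup_iff by auto
  moreover have "norm (fst (Sq s x)) \<le> R \<and> norm (S s (fst x)) \<le> R" if "0 \<le> s" "s \<le> t" for s
    using solution_semigroup_norm_le[OF Sq aug_energy C0_nonneg order_refl[of "norm x"] that]
      solution_semigroup_norm_le[OF S nse_energy C0_nonneg norm_fst_le_norm[of x] that]
      norm_fst_le_norm[of "Sq s x"] unfolding R_def by linarith
  ultimately show ?thesis using forward_solution_unique[OF _ _ _ L _ assms(4)] by metis
qed

lemma aug_attractor_fst:
  assumes Sq: "solution_semigroup aug Sq" and G: "global_attractor_flow Sq Att_q"
    and S: "solution_semigroup nse S" and GA: "global_attractor_flow S Att"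
    and p: "p \<in> Att_q"
  shows "fst p \<in> Att"
proof -
  have inv: "\<And>t. t \<ge> 0 \<Longrightarrow> Sq t ` Att_q = Att_q" and "compact Att_q" "compact Att"
    using G GA unfolding global_attractor_flow_def by auto
  \<comment> \<open>As \<open>q = 1\<close> on \<open>Att_q\<close>, the \<open>u\<close>-component of \<open>p\<close> is reached by \<open>S\<close> from \<open>Att_q\<close> in any time.\<close>
  have reached: "\<exists>v\<in>fst ` Att_q. fst p = S t v" if t: "t \<ge> 0" for t
  proof -
    obtain x where "x \<in> Att_q" "Sq t x = p" using inv[OF t] p by (metis imageE)
    then show ?thesis using aug_flow_fst[OF Sq S aug_attractor_snd[OF Sq G] t] by blast
  qed
  have "bounded (fst ` Att_q)"
    using \<open>compact Att_q\<close> by (intro compact_imp_bounded compact_continuous_image continuous_intros)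
  have "fst p \<in> closure Att"
    unfolding closure_approachable
  proof (intro allI impI)
    fix e :: real assume "e > 0"
    obtain T where T: "\<And>t v. t \<ge> T \<Longrightarrow> v \<in> fst ` Att_q \<Longrightarrow> \<exists>y\<in>Att. dist (S t v) y < e"
      using global_attractor_flow_attracts[OF GA \<open>bounded (fst ` Att_q)\<close> \<open>e > 0\<close>] by blast
    obtain v where "v \<in> fst ` Att_q" "fst p = S (max T 0) v" using reached[of "max T 0"] by auto
    then show "\<exists>y\<in>Att. dist y (fst p) < e" using T[of "max T 0" v] by (auto simp: dist_commute)
  qed
  then show ?thesis using \<open>compact Att\<close> by (simp add: compact_imp_closed)
qed

subsection \<open>Convergence of the discrete attractors\<close>

lemma bdf2_orbit_start_near_attractor:
  assumes Sq: "solution_semigroup aug Sq" and G: "global_attractor_flow Sq Att_q" and e: "e > 0"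
  obtains \<delta> where "\<delta> > 0"
    "\<And>k z. 0 < k \<Longrightarrow> k < \<delta> \<Longrightarrow> bdf2_orbit k z \<Longrightarrow> (\<And>n. norm (z n) \<le> absorbing_radius) \<Longrightarrow>
      \<exists>p\<in>Att_q. norm (z 0 - p) \<le> e \<and> norm (z 1 - p) \<le> e"
proof -
  obtain T0 where T0: "\<And>t x. t \<ge> T0 \<Longrightarrow> x \<in> cball 0 absorbing_radius \<Longrightarrow> \<exists>p\<in>Att_q. dist (Sq t x) p < e / 2"
    using global_attractor_flow_attracts[OF G bounded_cball half_gt_zero[OF e]] by blast
  define T where "T = max T0 0"
  obtain C where C: "C \<ge> 0"
    "\<And>k z M. 0 < k \<Longrightarrow> bdf2_orbit k z \<Longrightarrow> (\<And>n. norm (z n) \<le> absorbing_radius) \<Longrightarrow> real M * k \<le> T + 1 \<Longrightarrow>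
      norm (z (int M) - Sq (real M * k) (z 0)) \<le> k * C"
    using bdf2_finite_time_error[OF Sq, of "T + 1"] by (auto simp: T_def)
  obtain GB where GB: "GB \<ge> 0"
    "\<And>z0 z1 z2. norm z0 \<le> absorbing_radius \<Longrightarrow> norm z1 \<le> absorbing_radius \<Longrightarrow> norm z2 \<le> absorbing_radius \<Longrightarrow>
      norm (extrap_field z0 z1 z2) \<le> GB"
    using extrap_field_bounded[where R = absorbing_radius] by blast
  define \<delta> where "\<delta> = min 1 (e / (2 * (C + GB + 1)))"
  have "\<exists>p\<in>Att_q. norm (z 0 - p) \<le> e \<and> norm (z 1 - p) \<le> e"
    if k: "0 < k" "k < \<delta>" and orbit: "bdf2_orbit k z" and zb: "\<And>n. norm (z n) \<le> absorbing_radius" for k z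
  proof -
    have "k * (C + GB + 1) \<le> e / 2" using k C(1) GB(1) by (simp add: \<delta>_def field_simps)
    then have kCG: "k * C + k * GB \<le> e / 2" using k(1) by (simp add: algebra_simps)
    \<comment> \<open>Follow the flow from the orbit point \<open>M\<close> steps back, where \<open>M k\<close> is just past the attraction time.\<close>
    obtain M where M: "T \<le> real M * k" "real M * k \<le> T + k"
      using obtain_grid_time[OF k(1), of T] by (auto simp: T_def)
    have zC: "norm (z 0 - Sq (real M * k) (z (- int M))) \<le> k * C"
      using C(2)[OF k(1) bdf2_orbit_shift[OF orbit, of "- int M"] zb, of M] M(2) k(2)
      by (simp add: \<delta>_def)
    have "T0 \<le> real M * k" "z (- int M) \<in> cball 0 absorbing_radius" using M(1) zb by (auto simp: T_def)
    then obtain p where p: "p \<in> Att_q" "dist (Sq (real M * k) (z (- int M))) p < e / 2" using T0 by blast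
    then have "norm (Sq (real M * k) (z (- int M)) - p) \<le> e / 2" by (simp add: dist_norm)
    with zC have p0: "norm (z 0 - p) \<le> k * C + e / 2" by (rule norm_diff_triangle_le)
    have "norm (z 1 - z 0) \<le> k * GB"
      using bdf2_orbit_increment_le[OF k(1) orbit zb, of GB 0] GB(2)[OF zb zb zb] by simp
    then have p1: "norm (z 1 - p) \<le> k * GB + (k * C + e / 2)" using p0 by (rule norm_diff_triangle_le)
    have "0 \<le> k * GB" using k(1) GB(1) by simp
    then have "norm (z 0 - p) \<le> e" "norm (z 1 - p) \<le> e" using p0 p1 kCG by linarith+
    then show ?thesis using p(1) by blast
  qed
  moreover have "\<delta> > 0" using e C(1) GB(1) by (simp add: \<delta>_def)
  ultimately show ?thesis using that by blast
qed

lemma bdf2_attractor_near_diag: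
  assumes Sq: "solution_semigroup aug Sq" and G: "global_attractor_flow Sq Att_q"
    and Gk: "\<forall>k\<in>{0<..1}. global_attractor_map (bdf2_map A N F \<gamma> k) (Att_k k)" and e: "e > 0"
  shows "eventually (\<lambda>k. \<forall>x\<in>Att_k k. \<exists>y\<in>diag_set Att_q. dist x y \<le> e) (at_right 0)"
proof -
  obtain \<delta> where \<delta>: "\<delta> > 0"
    "\<And>k z. 0 < k \<Longrightarrow> k < \<delta> \<Longrightarrow> bdf2_orbit k z \<Longrightarrow> (\<And>n. norm (z n) \<le> absorbing_radius) \<Longrightarrow>
      \<exists>p\<in>Att_q. norm (z 0 - p) \<le> e / 2 \<and> norm (z 1 - p) \<le> e / 2"
    using bdf2_orbit_start_near_attractor[OF Sq G, of "e / 2"] e by auto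
  have "eventually (\<lambda>k. k \<in> {0<..<min \<delta> 1}) (at_right 0)"
    using \<delta>(1) by (intro eventually_at_right_real) auto
  then show ?thesis
  proof (rule eventually_mono)
    fix k assume k: "k \<in> {0<..<min \<delta> 1}"
    show "\<forall>x\<in>Att_k k. \<exists>y\<in>diag_set Att_q. dist x y \<le> e"
    proof
      fix x assume x: "x \<in> Att_k k"
      have k0: "0 < k" and "global_attractor_map (bdf2_map A N F \<gamma> k) (Att_k k)" using Gk k by auto
      then obtain z B where z: "bdf2_orbit k z" "\<And>n. norm (z n) \<le> B" "z 0 = fst x" "z 1 = snd x"
        using global_attractor_obtain_bdf2_orbit x by blast
      have "k < \<delta>" using k by simp
      then obtain p where p: "p \<in> Att_q" "norm (fst x - p) \<le> e / 2" "norm (snd x - p) \<le> e / 2"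
        using \<delta>(2)[OF k0 _ z(1) bdf2_orbit_absorbed[OF k0 z(1,2)]] z(3,4) by auto
      have "x - (p, p) = (fst x - p, snd x - p)" by (simp add: prod_eq_iff)
      then have "dist x (p, p) \<le> norm (fst x - p) + norm (snd x - p)"
        using norm_Pair_le[of "fst x - p" "snd x - p"] by (simp add: dist_norm)
      then have "dist x (p, p) \<le> e" using p(2,3) by linarith
      moreover have "(p, p) \<in> diag_set Att_q" using p(1) unfolding diag_set_def by blast
      ultimately show "\<exists>y\<in>diag_set Att_q. dist x y \<le> e" by blast
    qed
  qed
qed

end

theorem theorem1:
  fixes A N :: "'a::euclidean_space \<Rightarrow> 'a" and F :: 'a and \<gamma> l0 :: real
    and S :: "real \<Rightarrow> 'a \<Rightarrow> 'a" and Sq :: "real \<Rightarrow> 'a \<times> real \<Rightarrow> 'a \<times> real"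
    and Att :: "'a set" and Att_q :: "('a \<times> real) set"
    and Att_k :: "real \<Rightarrow> (('a \<times> real) \<times> ('a \<times> real)) set"
  assumes A_lin: "bounded_linear A"
    and A_sym: "\<forall>u v. A u \<bullet> v = u \<bullet> A v"
    and l0_pos: "l0 > 0"
    and A_coercive: "\<forall>u. A u \<bullet> u \<ge> l0 * (norm u)\<^sup>2"
    and N_loclip: "locally_lipschitz N"
    and N_orth: "\<forall>u. N u \<bullet> u = 0"
    and gamma_pos: "\<gamma> > 0"
    and S_sol: "solution_semigroup (nse_field A N F) S"
    and Att_ga: "global_attractor_flow S Att"
    and Sq_sol: "solution_semigroup (aug_field A N F \<gamma>) Sq"
    and Att_q_ga: "global_attractor_flow Sq Att_q"
    and Att_k_ga: "\<forall>k\<in>{0<..1}. global_attractor_map (bdf2_map A N F \<gamma> k) (Att_k k)"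
  shows "((\<lambda>k. hsdist (Att_k k) (diag_set Att_q)) \<longlongrightarrow> 0) (at_right 0) \<and>
    ((\<lambda>k. hsdist ((fst \<circ> fst) ` Att_k k) Att) \<longlongrightarrow> 0) (at_right 0) \<and>
    ((\<lambda>k. hsdist ((fst \<circ> snd) ` Att_k k) Att) \<longlongrightarrow> 0) (at_right 0)"
proof -
  interpret augmented_system A N F \<gamma> l0
    using A_lin l0_pos A_coercive N_loclip N_orth gamma_pos by (rule augmented_system.intro)
  have diag: "((\<lambda>k. hsdist (Att_k k) (diag_set Att_q)) \<longlongrightarrow> 0) (at_right 0)"
    using bdf2_attractor_near_diag[OF Sq_sol Att_q_ga Att_k_ga] by (rule tendsto_hsdist_zeroI)
  have "fst ` Att_q \<subseteq> Att" using aug_attractor_fst[OF Sq_sol Att_q_ga S_sol Att_ga] by blast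
  then have "(fst \<circ> fst) ` diag_set Att_q \<subseteq> Att" "(fst \<circ> snd) ` diag_set Att_q \<subseteq> Att"
    by (auto simp: diag_set_def)
  moreover have "dist ((fst \<circ> fst) x) ((fst \<circ> fst) y) \<le> dist x y"
    and "dist ((fst \<circ> snd) x) ((fst \<circ> snd) y) \<le> dist x y" for x y :: "('a \<times> real) \<times> ('a \<times> real)"
    using order_trans[OF dist_fst_le[of "fst x" "fst y"] dist_fst_le[of x y]]
      order_trans[OF dist_fst_le[of "snd x" "snd y"] dist_snd_le[of x y]] by simp_all
  ultimately show ?thesis
    using diag tendsto_hsdist_image[OF diag, of "fst \<circ> fst"] tendsto_hsdist_image[OF diag, of "fst \<circ> snd"]
    by simp
qed

end
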